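(* Let $\mathcal S$ be a non-degenerate affine zipper with signature $(0,\dots,0)$ whose matrices have dominated splitting of index-1, and assume $v$ is symmetric. Then for every $\mathbf i\in\Sigma$, $$\alpha(\pi(\mathbf i))\ge\liminf_{n\to\infty}\frac{\log\|A_{\mathbf i|_n}\|}{\log\lambda_{\mathbf i|_n}}.$$
   Context: Affine zipper with signature $(0,\dots,0)$: $f_i(x)=A_ix+t_i$ ($i=0,\dots,N-1$) on $\mathbb R^d$, $A_i$ invertible, each $f_i$ a contraction, vertices $z_0,\dots,z_N$ with $f_i(z_0)=z_i$, $f_i(z_N)=z_{i+1}$; $\Gamma=\bigcup_if_i(\Gamma)$. Fix a probability vector $\lambda$ with $\lambda_i>0$; $g_i(x)=\lambda_ix+\gamma_i$, $\gamma_i=\sum_{j<i}\lambda_j$; $v:[0,1]\to\mathbb R^d$ the unique continuous function with $v(x)=f_i(v(g_i^{-1}(x)))$ for $x\in g_i([0,1])$; $\alpha(x)=\liminf_{y\to x}\frac{\log\|v(x)-v(y)\|}{\log|x-y|}$. For a word $\bar\imath=i_1\dots i_k$: $A_{\bar\imath}=A_{i_1}\cdots A_{i_k}$, $\lambda_{\bar\imath}=\lambda_{i_1}\cdots\lambda_{i_k}$. Euclidean operator norms. Dominated splitting of index-1: there is a nonempty open $M\subset\mathbb{PR}^{d-1}$ (projective action; $\langle w\rangle$ the line through $w\ne0$) with finitely many components with pairwise disjoint closures, $\bigcup_iA_i\overline M\subset M^o$, and some hyperplane transverse to all elements of $\overline M$. Non-degenerate: there is a bounded open $U$ with $f_i(U)\cap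 f_j(U)=\emptyset$ ($i\ne j$), $\Gamma\cap U\ne\emptyset$, and $\langle z_N-z_0\rangle\notin\bigcap_{k\ge0}\bigcap_{|\bar\imath|=k}A_{\bar\imath}^{-1}(M^c)$. Symmetric: $\lambda_0=\lambda_{N-1}$ and $\lim_{k\to\infty}\|A_0^k\|/\|A_{N-1}^k\|=1$. Symbolic: $\Sigma=\{0,\dots,N-1\}^{\mathbb N}$, $\mathbf i|_n=i_1\dots i_n$; $\pi(\mathbf i)=\sum_{n\ge1}\lambda_{\mathbf i|_{n-1}}\gamma_{i_n}\in[0,1]$. *)

theory Defs
  imports "HOL-Analysis.Analysis"
begin

definition word_mat :: "(nat \<Rightarrow> real^'d^'d) \<Rightarrow> nat list \<Rightarrow> real^'d^'d" where
  "word_mat A w = foldr (\<lambda>i M. A i ** M) w (mat 1)"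

definition words :: "nat \<Rightarrow> nat \<Rightarrow> nat list set" where
  "words N k = {w. length w = k \<and> (\<forall>i\<in>set w. i < N)}"

text \<open>Restriction i|_n of an infinite word (0-based: letters i 0, ..., i (n-1)).\<close>
definition prefix_word :: "(nat \<Rightarrow> nat) \<Rightarrow> nat \<Rightarrow> nat list" where
  "prefix_word ii n = map ii [0..<n]"

definition opnorm :: "real^'d^'d \<Rightarrow> real" where
  "opnorm M = onorm (\<lambda>x. M *v x)"

definition proj_line :: "real^'d \<Rightarrow> (real^'d) set" where
  "proj_line w = span {w}"

definition proj_space :: "(real^'d) set set" where
  "proj_space = {proj_line w | w. w \<noteq> 0}"

text \<open>Quotient topology on the projective space.\<close>
definition proj_top :: "(real^'d) set topology" where
  "proj_top = topology (\<lambda>U. U \<subseteq> proj_space \<and> open {w. w \<noteq> 0 \<and> proj_line w \<in> U})"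

definition proj_act :: "real^'d^'d \<Rightarrow> (real^'d) set \<Rightarrow> (real^'d) set" where
  "proj_act M l = (\<lambda>x. M *v x) ` l"

definition dominated_splitting_index1 ::
  "nat \<Rightarrow> (nat \<Rightarrow> real^'d^'d) \<Rightarrow> (real^'d) set set \<Rightarrow> bool" where
  "dominated_splitting_index1 N A M \<longleftrightarrow>
     M \<noteq> {} \<and> openin proj_top M \<and>
     finite (connected_components_of (subtopology proj_top M)) \<and>
     pairwise (\<lambda>C D. disjnt (proj_top closure_of C) (proj_top closure_of D))
       (connected_components_of (subtopology proj_top M)) \<and>
     (\<Union>i<N. proj_act (A i) ` (proj_top closure_of M)) \<subseteq> proj_top interior_of M \<and>
     (\<exists>a::real^'d. a \<noteq> 0 \<and>
        (\<forall>l \<in> proj_top closure_of M. \<not> l \<subseteq> {x. a \<bullet> x = 0}))"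

definition contraction :: "(real^'d \<Rightarrow> real^'d) \<Rightarrow> bool" where
  "contraction f \<longleftrightarrow> (\<exists>c<1. \<forall>x y. dist (f x) (f y) \<le> c * dist x y)"

definition gam :: "(nat \<Rightarrow> real) \<Rightarrow> nat \<Rightarrow> real" where
  "gam lam i = (\<Sum>j<i. lam j)"

text \<open>Coding map pi(i) = sum_{n>=1} lambda_{i|n-1} gamma_{i_n} (0-based indexing).\<close>
definition coding :: "(nat \<Rightarrow> real) \<Rightarrow> (nat \<Rightarrow> nat) \<Rightarrow> real" where
  "coding lam ii = (\<Sum>n. (\<Prod>k<n. lam (ii k)) * gam lam (ii n))"

text \<open>Pointwise Hoelder exponent alpha(x); log 0 = -infinity gives ratio +infinity.\<close>
definition holder_exp :: "(real \<Rightarrow> real^'d) \<Rightarrow> real \<Rightarrow> ereal" where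
  "holder_exp v x = Liminf (at x within {0..1})
     (\<lambda>y. if v y = v x then \<infinity> else ereal (ln (norm (v x - v y)) / ln \<bar>x - y\<bar>))"

end

theory Submission
  imports Defs
begin

text \<open>
  Let x = pi(i) and let beta be below the liminf, so that ||A_(i|n)|| <= C lambda_(i|n)^beta
  for all n. For y > x take the last level n at which y still lies in the cylinder of i|n,
  and let a = i_(n+1), b = a + 1. Either y lies beyond the neighbouring cylinder of (i|n) b,
  whose length then bounds lambda_(i|n) by a multiple of y - x; or y lies in a cylinder of
  (i|n) b 0^m and x in the cylinder of (i|n) a (N-1)^k, and these two cylinders share an
  endpoint p. The dominated splitting makes operator norms quasi-multiplicative,
  ||A_u|| ||A_w|| <= Q ||A_(u a w)||, and together with the symmetry ||A_0^k|| ~ ||A_(N-1)^k||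
  this controls the oscillation of v between p and y by the matrix of the cylinder containing x.
  Hence ||v y - v x|| <= K |y - x|^beta, and the reflection s |-> 1 - s gives the same for y < x.
\<close>

section \<open>Operator norms of matrix products\<close>

lemma opnorm_mult_le: "norm (M *v x) \<le> opnorm M * norm x"
  unfolding opnorm_def by (rule onorm) (rule matrix_vector_mul_bounded_linear)

lemma opnorm_nonneg: "opnorm M \<ge> 0"
  unfolding opnorm_def by (rule onorm_pos_le) (rule matrix_vector_mul_bounded_linear)

lemma opnorm_le: "(\<And>x. norm (M *v x) \<le> b * norm x) \<Longrightarrow> opnorm M \<le> b"
  unfolding opnorm_def by (rule onorm_le)

lemma opnorm_matrix_mul_le: "opnorm (M ** M') \<le> opnorm M * opnorm M'"
proof -
  have "onorm ((*v) M \<circ> (*v) M') \<le> onorm ((*v) M) * onorm ((*v) M')"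
    by (rule onorm_compose) auto
  moreover have "(*v) M \<circ> (*v) M' = (*v) (M ** M')"
    by (auto simp: matrix_vector_mul_assoc)
  ultimately show ?thesis unfolding opnorm_def by simp
qed

lemma opnorm_mat1_le: "opnorm (mat 1 :: real^'d^'d) \<le> 1"
  by (rule opnorm_le) (simp add: matrix_vector_mul_lid)

lemma invertible_mult_nonzero:
  fixes M :: "real^'d^'d"
  shows "invertible M \<Longrightarrow> z \<noteq> 0 \<Longrightarrow> M *v z \<noteq> 0"
  using matrix_left_invertible_ker invertible_left_inverse by metis

lemma opnorm_pos_if_invertible:
  fixes M :: "real^'d^'d"
  assumes "invertible M"
  shows "opnorm M > 0"
proof -
  obtain i :: 'd where True by simp
  have "0 < norm (M *v axis i 1)"
    using invertible_mult_nonzero[OF assms] by (simp add: axis_eq_0_iff)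
  also have "\<dots> \<le> opnorm M" using opnorm_mult_le[of M "axis i 1"] by simp
  finally show ?thesis .
qed

lemma word_mat_Nil [simp]: "word_mat A [] = mat 1"
  by (simp add: word_mat_def)

lemma word_mat_Cons [simp]: "word_mat A (j # w) = A j ** word_mat A w"
  by (simp add: word_mat_def)

lemma word_mat_append: "word_mat A (w @ w') = word_mat A w ** word_mat A w'"
  by (induction w) (auto simp: matrix_mul_assoc)

lemma word_mat_map: "word_mat (A \<circ> f) w = word_mat A (map f w)"
  by (induction w) auto

lemma opnorm_word_mat_append_le:
  "opnorm (word_mat A (w @ w')) \<le> opnorm (word_mat A w) * opnorm (word_mat A w')"
  by (simp add: word_mat_append opnorm_matrix_mul_le)

lemma invertible_word_mat:
  assumes "\<forall>i\<in>set w. invertible (A i)"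
  shows "invertible (word_mat A w)"
  using assms
proof (induction w)
  case Nil
  show ?case unfolding invertible_def by (auto simp: matrix_mul_lid)
qed (auto intro: invertible_mult)

lemma opnorm_word_mat_le_1:
  assumes "\<forall>i\<in>set w. opnorm (A i) \<le> 1"
  shows "opnorm (word_mat A w) \<le> 1"
  using assms
proof (induction w)
  case (Cons j w)
  have "opnorm (word_mat A (j # w)) \<le> opnorm (A j) * opnorm (word_mat A w)"
    by (simp add: opnorm_matrix_mul_le)
  also have "\<dots> \<le> 1" using Cons by (auto intro: mult_le_one opnorm_nonneg)
  finally show ?case .
qed (simp add: opnorm_mat1_le)

lemma opnorm_word_mat_infix_le:
  assumes "\<forall>i\<in>set w1 \<union> set w3. opnorm (A i) \<le> 1"
  shows "opnorm (word_mat A (w1 @ w2 @ w3)) \<le> opnorm (word_mat A w2)"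
proof -
  have "opnorm (word_mat A (w1 @ w2 @ w3))
      \<le> opnorm (word_mat A w1) * (opnorm (word_mat A w2) * opnorm (word_mat A w3))"
    by (simp add: word_mat_append opnorm_matrix_mul_le order_trans[OF opnorm_matrix_mul_le]
        mult_left_mono opnorm_nonneg)
  also have "\<dots> \<le> 1 * (opnorm (word_mat A w2) * 1)"
    using assms opnorm_word_mat_le_1[of w1 A] opnorm_word_mat_le_1[of w3 A]
    by (intro mult_mono) (auto intro: mult_nonneg_nonneg opnorm_nonneg)
  finally show ?thesis by simp
qed

lemma prefix_word_0 [simp]: "prefix_word ii 0 = []"
  by (simp add: prefix_word_def)

lemma length_prefix_word [simp]: "length (prefix_word ii n) = n"
  by (simp add: prefix_word_def)

lemma prefix_word_Suc: "prefix_word ii (Suc n) = prefix_word ii n @ [ii n]"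
  by (simp add: prefix_word_def)

lemma prefix_word_add: "prefix_word ii (n + k) = prefix_word ii n @ map ii [n..<n + k]"
  unfolding prefix_word_def using upt_add_eq_append[of 0 n k] by simp

lemma exists_power_bracket:
  fixes s q :: real
  assumes "0 < s" "s \<le> 1" "0 < q" "q < 1"
  obtains m where "q ^ Suc m < s" "s \<le> q ^ m"
proof -
  obtain n where "q ^ n < s" using real_arch_pow_inv[OF assms(1,4)] by blast
  then show ?thesis
    using ex_least_nat_less[of "\<lambda>m. q ^ m < s" n] assms(2) that by (force simp: not_less)
qed

lemma contraction_fixpoint_unique:
  assumes "contraction f" "f a = a" "f b = b"
  shows "a = b"
proof -
  obtain c where c: "c < 1" "\<forall>x y. dist (f x) (f y) \<le> c * dist x y"
    using assms(1) unfolding contraction_def by auto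
  then have "dist a b \<le> c * dist a b" using assms(2,3) by metis
  then have "(1 - c) * dist a b \<le> 0" by (simp add: algebra_simps)
  then show ?thesis using c(1) by (simp add: mult_le_0_iff)
qed

lemma contraction_opnorm_le_1:
  fixes B :: "real^'d^'d"
  assumes "contraction (\<lambda>x. B *v x + t)"
  shows "opnorm B \<le> 1"
proof (rule opnorm_le)
  obtain c where c: "c < 1" "\<forall>x y. dist (B *v x + t) (B *v y + t) \<le> c * dist x y"
    using assms unfolding contraction_def by auto
  fix y :: "real^'d"
  have "norm (B *v y) \<le> c * norm y" using c(2)[rule_format, of y 0] by (simp add: dist_norm)
  also have "\<dots> \<le> 1 * norm y" using c(1) by (intro mult_right_mono) auto
  finally show "norm (B *v y) \<le> 1 * norm y" .
qed

lemma two_le_if_distinct_endpoints: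
  assumes "N \<ge> 1" "\<forall>i<N. contraction (\<lambda>x. A i *v x + t i)"
    "\<forall>i<N. A i *v z 0 + t i = z i" "\<forall>i<N. A i *v z N + t i = z (Suc i)" "z N \<noteq> z 0"
  shows "N \<ge> 2"
proof (rule ccontr)
  assume "\<not> N \<ge> 2"
  then have "N = 1" using assms(1) by simp
  then show False
    using contraction_fixpoint_unique[of "\<lambda>x. A 0 *v x + t 0" "z 0" "z N"] assms(2-5) by auto
qed

lemma convergent_ratio_imp_bounded:
  fixes f g :: "nat \<Rightarrow> real"
  assumes "(\<lambda>m. f m / g m) \<longlonglongrightarrow> L" "\<forall>m. g m > 0"
  obtains K where "K \<ge> 0" "\<forall>m. f m \<le> K * g m"
proof -
  obtain K where K: "\<forall>m. norm (f m / g m) \<le> K"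
    using convergent_imp_Bseq[of "\<lambda>m. f m / g m"] assms(1) unfolding Bseq_def convergent_def by auto
  have "f m \<le> K * g m" for m
  proof -
    have "f m / g m \<le> K" using K[rule_format, of m] by (metis abs_ge_self order_trans real_norm_def)
    then show ?thesis using assms(2) by (simp add: pos_divide_le_eq)
  qed
  moreover have "K \<ge> 0" using K[rule_format, of 0] norm_ge_zero[of "f 0 / g 0"] by linarith
  ultimately show ?thesis using that by blast
qed

lemma replicate_opnorms_comparable:
  fixes A :: "nat \<Rightarrow> real^'d^'d"
  assumes inv: "\<forall>i<N. invertible (A i)" and c: "c < N" "c' < N"
    and lim: "(\<lambda>k. opnorm (word_mat A (replicate k c)) / opnorm (word_mat A (replicate k c'))) \<longlonglongrightarrow> 1"
  obtains K1 K2 where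
    "K1 \<ge> 0" "\<forall>m. opnorm (word_mat A (replicate m c)) \<le> K1 * opnorm (word_mat A (replicate m c'))"
    "K2 \<ge> 0" "\<forall>m. opnorm (word_mat A (replicate m c')) \<le> K2 * opnorm (word_mat A (replicate m c))"
proof -
  have pos: "\<forall>m. opnorm (word_mat A (replicate m j)) > 0" if "j < N" for j
    using that inv by (intro allI opnorm_pos_if_invertible invertible_word_mat) auto
  obtain K1 where "K1 \<ge> 0" "\<forall>m. opnorm (word_mat A (replicate m c)) \<le> K1 * opnorm (word_mat A (replicate m c'))"
    using convergent_ratio_imp_bounded[OF lim pos[OF c(2)]] by blast
  moreover have "(\<lambda>k. opnorm (word_mat A (replicate k c')) / opnorm (word_mat A (replicate k c))) \<longlonglongrightarrow> 1"
    using tendsto_inverse[OF lim] by (simp add: inverse_divide)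
  then obtain K2 where "K2 \<ge> 0" "\<forall>m. opnorm (word_mat A (replicate m c')) \<le> K2 * opnorm (word_mat A (replicate m c))"
    by (rule convergent_ratio_imp_bounded[OF _ pos[OF c(1)]])
  ultimately show ?thesis using that by blast
qed

lemma quasi_multiplicative_map:
  assumes qm: "\<And>u a w. set u \<subseteq> {..<N} \<Longrightarrow> a < N \<Longrightarrow> set w \<subseteq> {..<N} \<Longrightarrow>
      opnorm (word_mat A u) * opnorm (word_mat A w) \<le> Q * opnorm (word_mat A (u @ a # w))"
    and f: "\<forall>j<N. f j < N"
    and u: "set u \<subseteq> {..<N}" and a: "a < N" and w: "set w \<subseteq> {..<N}"
  shows "opnorm (word_mat (A \<circ> f) u) * opnorm (word_mat (A \<circ> f) w) \<le> Q * opnorm (word_mat (A \<circ> f) (u @ a # w))"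
  using qm[of "map f u" "f a" "map f w"] f u a w by (auto simp: word_mat_map)

lemma quasi_multiplicative_replicate:
  assumes qm: "\<And>u a w. set u \<subseteq> {..<N} \<Longrightarrow> a < N \<Longrightarrow> set w \<subseteq> {..<N} \<Longrightarrow>
      opnorm (word_mat A u) * opnorm (word_mat A w) \<le> Q * opnorm (word_mat A (u @ a # w))"
    and K: "K \<ge> 0" "\<forall>m. opnorm (word_mat A (replicate m c)) \<le> K * opnorm (word_mat A (replicate m c'))"
    and c': "c' < N" and u: "set u \<subseteq> {..<N}" and a: "a < N"
  shows "opnorm (word_mat A u) * opnorm (word_mat A (replicate m c))
           \<le> K * Q * opnorm (word_mat A (u @ a # replicate m c'))"
proof -
  have "opnorm (word_mat A u) * opnorm (word_mat A (replicate m c))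
      \<le> opnorm (word_mat A u) * (K * opnorm (word_mat A (replicate m c')))"
    using K(2) opnorm_nonneg by (intro mult_left_mono) auto
  also have "\<dots> = K * (opnorm (word_mat A u) * opnorm (word_mat A (replicate m c')))" by simp
  also have "\<dots> \<le> K * (Q * opnorm (word_mat A (u @ a # replicate m c')))"
    using qm[OF u a, of "replicate m c'"] c' K(1) by (intro mult_left_mono) (auto simp: subset_iff)
  finally show ?thesis by (simp add: mult.assoc)
qed

section \<open>Hoelder exponents\<close>

lemma liminf_log_ratio_imp_bound:
  fixes a l :: "nat \<Rightarrow> real"
  assumes a: "\<forall>n. a n \<ge> 0" and l: "\<forall>n. l n > 0" "\<forall>\<^sub>F n in sequentially. l n < 1"
    and beta: "ereal \<beta> < liminf (\<lambda>n. ereal (ln (a n) / ln (l n)))"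
  obtains C where "\<forall>n. a n \<le> C * l n powr \<beta>"
proof -
  have "\<forall>\<^sub>F n in sequentially. a n \<le> l n powr \<beta>"
    using le_Liminf_iff[THEN iffD1, of _ sequentially, OF order.refl, rule_format, OF beta] l(2)
  proof eventually_elim
    case (elim n)
    then have ln_l: "ln (l n) < 0" using l(1) by simp
    show ?case
    proof (cases "a n = 0")
      case False
      then have "a n > 0" using a by (simp add: less_le)
      moreover have "ln (a n) < \<beta> * ln (l n)"
        using elim ln_l by (simp add: neg_less_divide_eq mult.commute)
      ultimately have "a n < exp (\<beta> * ln (l n))" by (metis exp_less_mono exp_ln)
      then show ?thesis using l(1)[rule_format, of n] by (simp add: powr_def)
    qed (use l(1) in simp)
  qed
  then obtain n0 where n0: "\<forall>n\<ge>n0. a n \<le> l n powr \<beta>" by (auto simp: eventually_sequentially)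
  define C where "C = 1 + (\<Sum>n<n0. a n / l n powr \<beta>)"
  have terms: "a n / l n powr \<beta> \<ge> 0" for n using a l(1) by simp
  have "a n \<le> C * l n powr \<beta>" for n
  proof (cases "n < n0")
    case True
    then have "a n / l n powr \<beta> \<le> C"
      unfolding C_def using member_le_sum[of n "{..<n0}" "\<lambda>n. a n / l n powr \<beta>"] terms by simp
    moreover have "l n powr \<beta> > 0" using l(1)[rule_format, of n] by simp
    ultimately show ?thesis by (simp add: pos_divide_le_eq)
  next
    case False
    have "C \<ge> 1" unfolding C_def using terms by (simp add: sum_nonneg)
    then have "l n powr \<beta> \<le> C * l n powr \<beta>" by (simp add: mult_le_cancel_right1)
    moreover have "a n \<le> l n powr \<beta>" using n0 False by simp
    ultimately show ?thesis by linarith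
  qed
  then show ?thesis using that by blast
qed

definition holder_ratio :: "(real \<Rightarrow> real^'d) \<Rightarrow> real \<Rightarrow> real \<Rightarrow> ereal" where
  "holder_ratio v x y = (if v y = v x then \<infinity> else ereal (ln (norm (v x - v y)) / ln \<bar>x - y\<bar>))"

lemma holder_exp_eq_Liminf_ratio: "holder_exp v x = Liminf (at x within {0..1}) (holder_ratio v x)"
  unfolding holder_exp_def holder_ratio_def ..

lemma eventually_holder_ratio_pos:
  assumes "continuous (at x within {0..1}) v"
  shows "\<forall>\<^sub>F y in at x within {0..1}. 0 < holder_ratio v x y"
proof -
  have "\<forall>\<^sub>F y in at x within {0..1}. dist (v y) (v x) < 1"
    using assms unfolding continuous_within by (rule tendstoD) simp
  moreover have "\<forall>\<^sub>F y in at x within {0..1}. y \<noteq> x \<and> dist y x < 1"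
    unfolding eventually_at by (intro exI[of _ 1]) auto
  ultimately show ?thesis
  proof eventually_elim
    case (elim y)
    show ?case
    proof (cases "v y = v x")
      case False
      then have "ln (norm (v x - v y)) < 0" "ln \<bar>x - y\<bar> < 0"
        using elim by (auto simp: dist_norm dist_real_def norm_minus_commute abs_minus_commute)
      then show ?thesis using False by (simp add: holder_ratio_def divide_neg_neg)
    qed (simp add: holder_ratio_def)
  qed
qed

lemma eventually_holder_ratio_gt:
  assumes holder: "\<forall>y\<in>{0..1}. norm (v y - v x) \<le> K * \<bar>y - x\<bar> powr b" and g: "g < b"
  shows "\<forall>\<^sub>F y in at x within {0..1}. ereal g < holder_ratio v x y"
proof -
  define K1 where "K1 = max K 0 + 1"
  have K1: "K1 > 0" "K \<le> K1" unfolding K1_def by auto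
  define r where "r = min 1 (exp (- ln K1 / (b - g)))"
  have "\<forall>\<^sub>F y in at x within {0..1}. y \<in> {0..1} \<and> y \<noteq> x \<and> dist y x < r"
    unfolding eventually_at r_def by (intro exI[of _ r]) (auto simp: r_def)
  then show ?thesis
  proof eventually_elim
    case (elim y)
    show ?case
    proof (cases "v y = v x")
      case False
      define d where "d = norm (v x - v y)"
      define h where "h = \<bar>x - y\<bar>"
      have d: "d > 0" using False by (simp add: d_def)
      have h: "0 < h" "h < 1" "h < exp (- ln K1 / (b - g))"
        using elim unfolding h_def r_def by (auto simp: dist_real_def abs_minus_commute)
      have "d \<le> K * h powr b"
        using holder elim unfolding d_def h_def by (metis atLeastAtMost_iff abs_minus_commute norm_minus_commute)
      also have "\<dots> \<le> K1 * h powr b" using K1(2) by (intro mult_right_mono) simp_all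
      finally have "ln d \<le> ln (K1 * h powr b)" using d by simp
      also have "\<dots> = ln K1 + b * ln h" using K1(1) h(1) by (simp add: ln_mult ln_powr)
      finally have "ln d \<le> ln K1 + b * ln h" .
      moreover have "(b - g) * ln h < - ln K1"
        using h(1,3) g ln_less_cancel_iff[of h "exp (- ln K1 / (b - g))"] by (simp add: field_simps)
      ultimately have "ln d < g * ln h" by (simp add: algebra_simps)
      moreover have "ln h < 0" using h by simp
      ultimately have "g < ln d / ln h" by (simp add: neg_less_divide_eq mult.commute)
      then show ?thesis using False by (simp add: holder_ratio_def d_def h_def)
    qed (simp add: holder_ratio_def)
  qed
qed

lemma holder_exp_ge:
  fixes v :: "real \<Rightarrow> real^'d"
  assumes cont: "continuous (at x within {0..1}) v"
    and holder: "\<And>\<beta>. 0 < \<beta> \<Longrightarrow> ereal \<beta> < L \<Longrightarrow> \<exists>K. \<forall>y\<in>{0..1}. norm (v y - v x) \<le> K * \<bar>y - x\<bar> powr \<beta>"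
  shows "L \<le> holder_exp v x"
  unfolding holder_exp_eq_Liminf_ratio
proof (rule le_Liminf_iff[THEN iffD2], intro allI impI)
  fix c assume c: "c < L"
  show "\<forall>\<^sub>F y in at x within {0..1}. c < holder_ratio v x y"
  proof (cases "c \<le> 0")
    case True
    show ?thesis
      using eventually_holder_ratio_pos[OF cont] by eventually_elim (use True in simp)
  next
    case False
    obtain b where b: "c < ereal b" "ereal b < L" using ereal_dense2[OF c] by blast
    then have "b > 0" using False by (cases c) auto
    then obtain K where K: "\<forall>y\<in>{0..1}. norm (v y - v x) \<le> K * \<bar>y - x\<bar> powr b"
      using holder b(2) by blast
    obtain g where g: "c = ereal g" "g < b" using b(1) False by (cases c) auto
    show ?thesis unfolding g(1) by (rule eventually_holder_ratio_gt[OF K g(2)])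
  qed
qed

section \<open>Quasi-multiplicativity from a dominated splitting\<close>

lemma proj_line_scaleR:
  assumes "c \<noteq> 0"
  shows "proj_line (c *\<^sub>R w) = proj_line w"
  unfolding proj_line_def span_singleton using assms
  by (auto simp: image_iff) (metis nonzero_eq_divide_eq)

lemma proj_act_proj_line: "proj_act B (proj_line w) = proj_line (B *v w)"
  unfolding proj_act_def proj_line_def span_singleton
  by (auto simp: matrix_vector_mult_scaleR image_iff)

lemma proj_line_mem_proj_space: "w \<noteq> 0 \<Longrightarrow> proj_line w \<in> proj_space"
  unfolding proj_space_def by auto

lemma istopology_proj_top:
  "istopology (\<lambda>U. U \<subseteq> (proj_space :: (real^'d) set set) \<and> open {w. w \<noteq> 0 \<and> proj_line w \<in> U})"
proof -
  have "{w::real^'d. w \<noteq> 0 \<and> proj_line w \<in> S \<inter> T}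
      = {w. w \<noteq> 0 \<and> proj_line w \<in> S} \<inter> {w. w \<noteq> 0 \<and> proj_line w \<in> T}" for S T
    by auto
  moreover have "{w::real^'d. w \<noteq> 0 \<and> proj_line w \<in> \<Union>K}
      = (\<Union>U\<in>K. {w. w \<noteq> 0 \<and> proj_line w \<in> U})" for K
    by auto
  ultimately show ?thesis unfolding istopology_def by (auto intro!: open_Int open_Union)
qed

lemma openin_proj_top:
  "openin proj_top U \<longleftrightarrow> U \<subseteq> proj_space \<and> open {w. w \<noteq> 0 \<and> proj_line w \<in> U}"
  unfolding proj_top_def topology_inverse'[OF istopology_proj_top] by simp

lemma topspace_proj_top: "topspace (proj_top :: (real^'d) set topology) = proj_space"
proof
  show "topspace proj_top \<subseteq> (proj_space :: (real^'d) set set)"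
    unfolding topspace_def using openin_proj_top by auto
  have "{w. w \<noteq> 0 \<and> proj_line w \<in> proj_space} = - {0 :: real^'d}"
    using proj_line_mem_proj_space by auto
  then have "openin proj_top (proj_space :: (real^'d) set set)"
    unfolding openin_proj_top by (simp add: open_Compl)
  then show "(proj_space :: (real^'d) set set) \<subseteq> topspace proj_top" by (rule openin_subset)
qed

lemma proj_line_mem_closure_of:
  assumes z: "z \<in> closure {w. w \<noteq> 0 \<and> proj_line w \<in> M}" "z \<noteq> 0"
  shows "proj_line z \<in> proj_top closure_of M"
  unfolding in_closure_of
proof (intro conjI allI impI)
  show "proj_line z \<in> topspace proj_top"
    using topspace_proj_top proj_line_mem_proj_space z(2) by auto
  fix T assume T: "proj_line z \<in> T \<and> openin proj_top T"
  then have "open {w. w \<noteq> 0 \<and> proj_line w \<in> T}" "z \<in> {w. w \<noteq> 0 \<and> proj_line w \<in> T}"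
    using openin_proj_top z(2) by auto
  then have "{w. w \<noteq> 0 \<and> proj_line w \<in> T} \<inter> {w. w \<noteq> 0 \<and> proj_line w \<in> M} \<noteq> {}"
    using z(1) open_Int_closure_eq_empty by blast
  then show "\<exists>y. y \<in> M \<and> y \<in> T" by auto
qed

lemma norm_le_via_transversal:
  fixes B :: "real^'d^'d"
  assumes S: "\<forall>w\<in>S. \<delta> * norm w \<le> \<bar>a \<bullet> w\<bar>" "0 \<notin> S" and \<delta>: "\<delta> > 0" and r: "r > 0"
    and seg: "\<And>s. \<bar>s\<bar> \<le> r \<Longrightarrow> B *v (x + s *\<^sub>R y) \<in> S"
  shows "\<delta> * r * norm (B *v y) \<le> (2 * norm a + \<delta>) * norm (B *v x)"
proof -
  define P where "P = a \<bullet> (B *v x)"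
  define q where "q = a \<bullet> (B *v y)"
  have lin: "a \<bullet> (B *v (x + s *\<^sub>R y)) = P + s * q" for s
    by (simp add: P_def q_def matrix_vector_right_distrib matrix_vector_mult_scaleR
        inner_add_right inner_scaleR_right)
  have nz: "P + s * q \<noteq> 0" if "\<bar>s\<bar> \<le> r" for s
  proof -
    have "B *v (x + s *\<^sub>R y) \<noteq> 0" using seg[OF that] S(2) by auto
    then have "0 < \<delta> * norm (B *v (x + s *\<^sub>R y))" using \<delta> by simp
    then show ?thesis using S(1) seg[OF that] lin[of s] by fastforce
  qed
  \<comment> \<open>Transversality: s \<mapsto> P + s q has no zero on [-r, r], so |r q| < |P|.\<close>
  have "(P + r * q) * (P - r * q) > 0"
  proof (rule ccontr)
    assume "\<not> ?thesis"
    then have "P + (-r) * q \<le> 0 \<and> 0 \<le> P + r * q \<or> P + r * q \<le> 0 \<and> 0 \<le> P + (-r) * q"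
      by (auto simp: mult_le_0_iff not_less)
    moreover have "continuous_on {-r..r} (\<lambda>s. P + s * q)" by (intro continuous_intros)
    ultimately obtain s where "-r \<le> s" "s \<le> r" "P + s * q = 0"
      using IVT'[of "\<lambda>s. P + s * q" "-r" 0 r] IVT2'[of "\<lambda>s. P + s * q" r 0 "-r"] r by force
    then show False using nz[of s] by (simp add: abs_le_iff)
  qed
  then have "(r * q)\<^sup>2 < P\<^sup>2" by (simp add: algebra_simps power2_eq_square)
  then have "\<bar>r * q\<bar> \<le> \<bar>P\<bar>" using abs_le_square_iff[of "r * q" P] by simp
  have "\<delta> * (r * norm (B *v y) - norm (B *v x)) \<le> \<delta> * norm (B *v (x + r *\<^sub>R y))"
    using norm_triangle_ineq4[of "B *v x + r *\<^sub>R (B *v y)" "B *v x"] r \<delta>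
    by (intro mult_left_mono) (simp_all add: matrix_vector_right_distrib matrix_vector_mult_scaleR)
  also have "\<dots> \<le> \<bar>P + r * q\<bar>"
    using S(1) seg[of r] r lin[of r] by auto
  also have "\<dots> \<le> 2 * \<bar>P\<bar>" using \<open>\<bar>r * q\<bar> \<le> \<bar>P\<bar>\<close> by linarith
  also have "\<dots> \<le> 2 * (norm a * norm (B *v x))" unfolding P_def using Cauchy_Schwarz_ineq2 by simp
  finally show ?thesis by (simp add: algebra_simps)
qed

locale dominated_splitting =
  fixes N :: nat and A :: "nat \<Rightarrow> real^'d^'d" and M :: "(real^'d) set set"
  assumes N_pos: "N \<ge> 1"
    and invertible_A: "\<forall>i<N. invertible (A i)"
    and dom: "dominated_splitting_index1 N A M"
begin

definition cone :: "(real^'d) set" where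
  "cone = {w. w \<noteq> 0 \<and> proj_line w \<in> M}"

lemma open_cone: "open cone"
  using dom openin_proj_top unfolding dominated_splitting_index1_def cone_def by auto

lemma zero_notin_cone: "0 \<notin> cone"
  by (simp add: cone_def)

lemma scaleR_mem_cone: "w \<in> cone \<Longrightarrow> c \<noteq> 0 \<Longrightarrow> c *\<^sub>R w \<in> cone"
  unfolding cone_def by (auto simp: proj_line_scaleR)

lemma A_closure_cone: "z \<in> closure cone \<Longrightarrow> z \<noteq> 0 \<Longrightarrow> i < N \<Longrightarrow> A i *v z \<in> cone"
proof -
  assume z: "z \<in> closure cone" "z \<noteq> 0" and i: "i < N"
  have "proj_line z \<in> proj_top closure_of M"
    using proj_line_mem_closure_of z unfolding cone_def by auto
  then have "proj_act (A i) (proj_line z) \<in> proj_top interior_of M"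
    using dom i unfolding dominated_splitting_index1_def by auto
  then have "proj_line (A i *v z) \<in> M"
    using interior_of_subset[of proj_top M] by (auto simp: proj_act_proj_line)
  then show ?thesis
    unfolding cone_def using invertible_mult_nonzero invertible_A i z(2) by auto
qed

lemma A_mem_cone: "z \<in> cone \<Longrightarrow> i < N \<Longrightarrow> A i *v z \<in> cone"
  using A_closure_cone[of z i] closure_subset[of cone] zero_notin_cone by auto

lemma word_mat_mem_cone: "set w \<subseteq> {..<N} \<Longrightarrow> z \<in> cone \<Longrightarrow> word_mat A w *v z \<in> cone"
proof (induction w)
  case (Cons j w)
  then have "word_mat A w *v z \<in> cone" "j < N" by auto
  then have "A j *v (word_mat A w *v z) \<in> cone"
    by (rule A_mem_cone)
  then show ?case by (simp add: matrix_vector_mul_assoc)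
qed (simp add: matrix_vector_mul_lid)

lemma closure_cone_sphere:
  assumes "z \<in> closure (cone \<inter> sphere 0 1)"
  shows "z \<in> closure cone" "norm z = 1"
proof -
  have "closure (cone \<inter> sphere 0 1) \<subseteq> closure cone" by (rule closure_mono) simp
  moreover have "closure (cone \<inter> sphere 0 1) \<subseteq> sphere 0 1" by (rule closure_minimal) auto
  ultimately show "z \<in> closure cone" "norm z = 1" using assms by (auto dest: subsetD)
qed

lemma cone_transversal:
  obtains a \<delta> where "\<delta> > 0" "\<forall>w\<in>cone. \<delta> * norm w \<le> \<bar>a \<bullet> w\<bar>"
proof -
  let ?T = "closure (cone \<inter> sphere 0 1)"
  obtain a :: "real^'d" where a: "\<forall>l \<in> proj_top closure_of M. \<not> l \<subseteq> {x. a \<bullet> x = 0}"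
    using dom unfolding dominated_splitting_index1_def by blast
  note T = closure_cone_sphere
  have a_T: "a \<bullet> z \<noteq> 0" if "z \<in> ?T" for z
  proof
    assume az: "a \<bullet> z = 0"
    have "z \<noteq> 0" using T[OF that] by auto
    then have "proj_line z \<in> proj_top closure_of M"
      using proj_line_mem_closure_of T[OF that] unfolding cone_def by auto
    moreover have "proj_line z \<subseteq> {x. a \<bullet> x = 0}"
      unfolding proj_line_def span_singleton using az by auto
    ultimately show False using a by blast
  qed
  obtain \<delta> where \<delta>: "\<delta> > 0" "\<forall>z\<in>?T. \<delta> \<le> \<bar>a \<bullet> z\<bar>"
  proof (cases "?T = {}")
    case False
    have "continuous_on ?T (\<lambda>z. \<bar>a \<bullet> z\<bar>)" by (intro continuous_intros)
    moreover have "compact ?T" by (simp add: bounded_Int)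
    ultimately obtain z0 where "z0 \<in> ?T" "\<forall>z\<in>?T. \<bar>a \<bullet> z0\<bar> \<le> \<bar>a \<bullet> z\<bar>"
      using continuous_attains_inf[of ?T] False by blast
    then show ?thesis using that[of "\<bar>a \<bullet> z0\<bar>"] a_T by auto
  qed (use that[of 1] in auto)
  have "\<delta> * norm w \<le> \<bar>a \<bullet> w\<bar>" if w: "w \<in> cone" for w
  proof -
    have "w \<noteq> 0" using w zero_notin_cone by auto
    then have "(1 / norm w) *\<^sub>R w \<in> cone \<inter> sphere 0 1"
      using scaleR_mem_cone[OF w] by simp
    then have "(1 / norm w) *\<^sub>R w \<in> ?T" by (rule closure_subset[THEN subsetD])
    then have "\<delta> \<le> \<bar>a \<bullet> ((1 / norm w) *\<^sub>R w)\<bar>" using \<delta>(2) by blast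
    then have "\<delta> \<le> \<bar>a \<bullet> w\<bar> / norm w" by (simp add: inner_scaleR_right)
    then show ?thesis using \<open>w \<noteq> 0\<close> by (simp add: field_simps)
  qed
  then show ?thesis using that \<delta>(1) by blast
qed

text \<open>A compact set of unit vectors inside the open cone that contains the direction of every
  A j *v z with z in the cone; its distance to the boundary of the cone gives the uniform
  constant in the cone estimate.\<close>
definition cone_core :: "(real^'d) set" where
  "cone_core = (\<Union>j<N. (\<lambda>z. (1 / norm (A j *v z)) *\<^sub>R (A j *v z)) ` closure (cone \<inter> sphere 0 1))"

lemma A_nonzero_closure_cone_sphere:
  assumes "z \<in> closure (cone \<inter> sphere 0 1)" "j < N"
  shows "A j *v z \<noteq> 0"
proof -
  have "z \<noteq> 0" using closure_cone_sphere(2)[OF assms(1)] by auto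
  then show ?thesis using invertible_mult_nonzero invertible_A assms(2) by blast
qed

lemma compact_cone_core: "compact cone_core"
  unfolding cone_core_def
proof (intro compact_UN ballI)
  fix j assume "j \<in> {..<N}"
  then have "continuous_on (closure (cone \<inter> sphere 0 1)) (\<lambda>z. (1 / norm (A j *v z)) *\<^sub>R (A j *v z))"
    using A_nonzero_closure_cone_sphere by (intro continuous_intros) auto
  then show "compact ((\<lambda>z. (1 / norm (A j *v z)) *\<^sub>R (A j *v z)) ` closure (cone \<inter> sphere 0 1))"
    by (rule compact_continuous_image) (simp add: bounded_Int)
qed simp

lemma cone_core_subset: "cone_core \<subseteq> cone"
proof
  fix x assume "x \<in> cone_core"
  then obtain j z where j: "j < N" and z: "z \<in> closure (cone \<inter> sphere 0 1)"
    and x: "x = (1 / norm (A j *v z)) *\<^sub>R (A j *v z)"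
    unfolding cone_core_def by auto
  have "A j *v z \<in> cone"
    using A_closure_cone closure_cone_sphere[OF z] j by force
  then show "x \<in> cone"
    using x scaleR_mem_cone A_nonzero_closure_cone_sphere[OF z j] by simp
qed

lemma norm_cone_core:
  assumes "x \<in> cone_core"
  shows "norm x = 1"
proof -
  obtain j z where "j < N" "z \<in> closure (cone \<inter> sphere 0 1)"
    and "x = (1 / norm (A j *v z)) *\<^sub>R (A j *v z)"
    using assms unfolding cone_core_def by auto
  then show ?thesis using A_nonzero_closure_cone_sphere by simp
qed

lemma normalized_A_mem_cone_core:
  assumes z: "z \<in> cone" and j: "j < N"
  shows "(1 / norm (A j *v z)) *\<^sub>R (A j *v z) \<in> cone_core"
proof -
  have z0: "z \<noteq> 0" using z zero_notin_cone by auto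
  define z' where "z' = (1 / norm z) *\<^sub>R z"
  have "z' \<in> cone \<inter> sphere 0 1" using scaleR_mem_cone[OF z] z0 by (simp add: z'_def)
  then have mem: "z' \<in> closure (cone \<inter> sphere 0 1)" by (rule closure_subset[THEN subsetD])
  have "(1 / norm (A j *v z')) *\<^sub>R (A j *v z') = (1 / norm (A j *v z)) *\<^sub>R (A j *v z)"
    using z0 by (simp add: z'_def matrix_vector_mult_scaleR field_simps)
  from image_eqI[where f = "\<lambda>z. (1 / norm (A j *v z)) *\<^sub>R (A j *v z)", OF sym[OF this] mem]
  have "(1 / norm (A j *v z)) *\<^sub>R (A j *v z)
      \<in> (\<lambda>z. (1 / norm (A j *v z)) *\<^sub>R (A j *v z)) ` closure (cone \<inter> sphere 0 1)" .
  then show ?thesis using j unfolding cone_core_def by blast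
qed

lemma cone_core_margin:
  obtains r where "r > 0" "\<forall>x\<in>cone_core. ball x r \<subseteq> cone"
proof -
  obtain r where "0 < r" "\<And>x. x \<in> cone_core \<Longrightarrow> \<exists>G\<in>{cone}. ball x r \<subseteq> G"
    using Heine_Borel_lemma[OF compact_cone_core, of "{cone}"] cone_core_subset open_cone by auto
  then show ?thesis using that by blast
qed

lemma opnorm_le_cone_core:
  obtains c where "c > 0"
    "\<And>B x. \<forall>w\<in>cone. B *v w \<in> cone \<Longrightarrow> x \<in> cone_core \<Longrightarrow> opnorm B \<le> c * norm (B *v x)"
proof -
  obtain a \<delta> where \<delta>: "\<delta> > 0" "\<forall>w\<in>cone. \<delta> * norm w \<le> \<bar>a \<bullet> w\<bar>"
    using cone_transversal by blast
  obtain r where r: "r > 0" "\<forall>x\<in>cone_core. ball x r \<subseteq> cone"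
    using cone_core_margin by blast
  define c where "c = (2 * norm a + \<delta>) / (\<delta> * (r / 2))"
  have "opnorm B \<le> c * norm (B *v x)"
    if B: "\<forall>w\<in>cone. B *v w \<in> cone" and x: "x \<in> cone_core" for B x
  proof (rule opnorm_le)
    fix y :: "real^'d"
    show "norm (B *v y) \<le> c * norm (B *v x) * norm y"
    proof (cases "y = 0")
      case False
      define y' where "y' = (1 / norm y) *\<^sub>R y"
      have seg: "B *v (x + s *\<^sub>R y') \<in> cone" if "\<bar>s\<bar> \<le> r / 2" for s
      proof -
        have "x + s *\<^sub>R y' \<in> ball x r" using that r(1) False by (simp add: y'_def dist_norm)
        then show ?thesis using r(2) x B by blast
      qed
      have "r / 2 > 0" using r(1) by simp
      from norm_le_via_transversal[OF \<delta>(2) zero_notin_cone \<delta>(1) this seg]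
      have "\<delta> * (r / 2) * norm (B *v y') \<le> (2 * norm a + \<delta>) * norm (B *v x)" .
      then have "norm (B *v y') \<le> c * norm (B *v x)"
        using \<delta>(1) r(1) by (simp add: c_def field_simps)
      then show ?thesis
        using False by (simp add: y'_def matrix_vector_mult_scaleR field_simps)
    qed simp
  qed
  moreover have "c > 0"
    using \<delta>(1) r(1) unfolding c_def by (intro divide_pos_pos add_nonneg_pos) auto
  ultimately show ?thesis using that by blast
qed

lemma uniform_inverse_bound:
  obtains K where "K > 0" "\<And>j z. j < N \<Longrightarrow> norm z \<le> K * norm (A j *v z)"
proof -
  have "\<forall>j\<in>{..<N}. \<exists>B. B ** A j = mat 1" using invertible_A invertible_left_inverse by blast
  then obtain Binv where "\<forall>j\<in>{..<N}. Binv j ** A j = mat 1" by (rule bchoice[THEN exE])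
  then have Binv: "\<And>j. j < N \<Longrightarrow> Binv j ** A j = mat 1" by simp
  define K where "K = 1 + (\<Sum>j<N. opnorm (Binv j))"
  have "norm z \<le> K * norm (A j *v z)" if j: "j < N" for j z
  proof -
    have "norm z = norm (Binv j *v (A j *v z))"
      using Binv[OF j] by (simp add: matrix_vector_mul_assoc matrix_vector_mul_lid)
    also have "\<dots> \<le> opnorm (Binv j) * norm (A j *v z)" by (rule opnorm_mult_le)
    also have "\<dots> \<le> K * norm (A j *v z)"
    proof (rule mult_right_mono)
      have "opnorm (Binv j) \<le> (\<Sum>j<N. opnorm (Binv j))"
        by (rule member_le_sum) (simp_all add: j opnorm_nonneg)
      then show "opnorm (Binv j) \<le> K" unfolding K_def by linarith
    qed simp
    finally show ?thesis .
  qed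
  moreover have "K > 0" unfolding K_def by (intro add_pos_nonneg sum_nonneg) (simp_all add: opnorm_nonneg)
  ultimately show ?thesis using that by blast
qed

lemma cone_core_nonempty: obtains x0 where "x0 \<in> cone_core"
proof -
  obtain l where "l \<in> M" using dom unfolding dominated_splitting_index1_def by auto
  moreover have "M \<subseteq> proj_space"
    using dom openin_proj_top unfolding dominated_splitting_index1_def by auto
  ultimately obtain w where "w \<noteq> 0" "proj_line w \<in> M" unfolding proj_space_def by auto
  then have "w \<in> cone" by (simp add: cone_def)
  then show ?thesis using normalized_A_mem_cone_core[of w 0] N_pos that by auto
qed

lemma quasi_multiplicative:
  obtains Q where "Q > 0" "\<And>u a w. set u \<subseteq> {..<N} \<Longrightarrow> a < N \<Longrightarrow> set w \<subseteq> {..<N} \<Longrightarrow>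
      opnorm (word_mat A u) * opnorm (word_mat A w) \<le> Q * opnorm (word_mat A (u @ a # w))"
proof -
  obtain c where c: "c > 0"
    "\<And>B x. \<forall>w\<in>cone. B *v w \<in> cone \<Longrightarrow> x \<in> cone_core \<Longrightarrow> opnorm B \<le> c * norm (B *v x)"
    using opnorm_le_cone_core by blast
  have word: "opnorm (word_mat A w) \<le> c * norm (word_mat A w *v x)"
    if "set w \<subseteq> {..<N}" "x \<in> cone_core" for w x
    using c(2) word_mat_mem_cone that by blast
  obtain K where K: "K > 0" "\<And>j z. j < N \<Longrightarrow> norm z \<le> K * norm (A j *v z)"
    using uniform_inverse_bound by blast
  obtain x0 where x0: "x0 \<in> cone_core" using cone_core_nonempty by blast
  have "opnorm (word_mat A u) * opnorm (word_mat A w) \<le> (c * c * K) * opnorm (word_mat A (u @ a # w))"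
    if u: "set u \<subseteq> {..<N}" and a: "a < N" and w: "set w \<subseteq> {..<N}" for u a w
  proof -
    define z where "z = word_mat A w *v x0"
    have "z \<in> cone" unfolding z_def using word_mat_mem_cone[OF w] cone_core_subset x0 by auto
    then have "A a *v z \<in> cone" using a by (rule A_mem_cone)
    then have Az: "A a *v z \<noteq> 0" using zero_notin_cone by auto
    define x1 where "x1 = (1 / norm (A a *v z)) *\<^sub>R (A a *v z)"
    have "x1 \<in> cone_core" unfolding x1_def using normalized_A_mem_cone_core[OF \<open>z \<in> cone\<close> a] .
    then have "opnorm (word_mat A u) * norm (A a *v z) \<le> c * norm (word_mat A u *v x1) * norm (A a *v z)"
      using word[OF u] by (simp add: mult_right_mono)
    also have "\<dots> = c * norm (word_mat A (u @ a # w) *v x0)"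
      using Az by (simp add: x1_def z_def matrix_vector_mult_scaleR word_mat_append matrix_vector_mul_assoc)
    also have "\<dots> \<le> c * opnorm (word_mat A (u @ a # w))"
      using opnorm_mult_le[of _ x0] norm_cone_core[OF x0] c(1) by simp
    finally have left: "opnorm (word_mat A u) * norm (A a *v z) \<le> c * opnorm (word_mat A (u @ a # w))" .
    have "opnorm (word_mat A w) \<le> c * norm z" using word[OF w x0] by (simp add: z_def)
    also have "\<dots> \<le> c * K * norm (A a *v z)" using K(2)[OF a, of z] c(1) by (simp add: mult.assoc)
    finally have "opnorm (word_mat A u) * opnorm (word_mat A w) \<le> opnorm (word_mat A u) * (c * K * norm (A a *v z))"
      using opnorm_nonneg[of "word_mat A u"] by (rule mult_left_mono)
    also have "\<dots> = c * K * (opnorm (word_mat A u) * norm (A a *v z))" by simp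
    also have "\<dots> \<le> c * K * (c * opnorm (word_mat A (u @ a # w)))"
      using left c(1) K(1) by (intro mult_left_mono) auto
    finally show ?thesis by (simp add: algebra_simps)
  qed
  moreover have "c * c * K > 0" using c(1) K(1) by simp
  ultimately show ?thesis using that by blast
qed

end

section \<open>Cylinders of the parametrisation\<close>

fun cyl_map :: "(nat \<Rightarrow> real) \<Rightarrow> nat list \<Rightarrow> real \<Rightarrow> real" where
  "cyl_map lam [] s = s"
| "cyl_map lam (j # w) s = lam j * cyl_map lam w s + gam lam j"

definition cyl_len :: "(nat \<Rightarrow> real) \<Rightarrow> nat list \<Rightarrow> real" where
  "cyl_len lam w = prod_list (map lam w)"

definition cylinder :: "(nat \<Rightarrow> real) \<Rightarrow> nat list \<Rightarrow> real set" where
  "cylinder lam w = cyl_map lam w ` {0..1}"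

lemma cyl_len_Nil [simp]: "cyl_len lam [] = 1"
  and cyl_len_Cons [simp]: "cyl_len lam (j # w) = lam j * cyl_len lam w"
  by (auto simp: cyl_len_def)

lemma cyl_len_append: "cyl_len lam (w @ w') = cyl_len lam w * cyl_len lam w'"
  by (simp add: cyl_len_def)

lemma cyl_len_replicate: "cyl_len lam (replicate m j) = lam j ^ m"
  by (simp add: cyl_len_def)

lemma cyl_len_prefix_word: "cyl_len lam (prefix_word ii n) = (\<Prod>k<n. lam (ii k))"
  by (induction n) (simp_all add: prefix_word_Suc cyl_len_append)

lemma cyl_map_affine: "cyl_map lam w s = cyl_len lam w * s + cyl_map lam w 0"
  by (induction w) (auto simp: algebra_simps)

lemma cyl_map_append: "cyl_map lam (w @ w') s = cyl_map lam w (cyl_map lam w' s)"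
  by (induction w) auto

lemma cyl_map_replicate_0: "cyl_map lam (replicate m 0) s = lam 0 ^ m * s"
  by (induction m) (auto simp: gam_def)

lemma cylinder_eq_interval:
  "cyl_len lam w \<ge> 0 \<Longrightarrow> cylinder lam w = {cyl_map lam w 0 .. cyl_map lam w 1}"
proof -
  have "cylinder lam w = (\<lambda>s. cyl_len lam w * s + cyl_map lam w 0) ` {0..1}"
    unfolding cylinder_def by (rule arg_cong[where f = "\<lambda>f. f ` {0..1}"]) (rule ext, rule cyl_map_affine)
  then show "cyl_len lam w \<ge> 0 \<Longrightarrow> ?thesis"
    using cyl_map_affine[of lam w 1] by (simp add: image_affinity_atLeastAtMost)
qed

lemma gam_Suc: "gam lam (Suc j) = gam lam j + lam j"
  by (simp add: gam_def)

locale weights =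
  fixes N :: nat and lam :: "nat \<Rightarrow> real"
  assumes N_ge2: "N \<ge> 2"
    and lam_pos: "\<forall>i<N. lam i > 0"
    and lam_sum: "(\<Sum>i<N. lam i) = 1"
begin

abbreviation flip :: "nat \<Rightarrow> nat" where
  "flip j \<equiv> N - 1 - j"

lemma gam_N: "gam lam N = 1"
  using lam_sum by (simp add: gam_def)

lemma gam_mono: "j \<le> k \<Longrightarrow> k \<le> N \<Longrightarrow> gam lam j \<le> gam lam k"
  unfolding gam_def using lam_pos by (intro sum_mono2) (auto intro: less_imp_le)

lemma gam_nonneg: "j \<le> N \<Longrightarrow> gam lam j \<ge> 0"
  using gam_mono[of 0 j] by (simp add: gam_def)

lemma gam_add_lam_le_1: "j < N \<Longrightarrow> gam lam j + lam j \<le> 1"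
  using gam_mono[of "Suc j" N] gam_N by (simp add: gam_Suc)

lemma gam_add_lam_last: "gam lam (N - 1) + lam (N - 1) = 1"
  using gam_N gam_Suc[of lam "N - 1"] N_ge2 by (simp add: Suc_diff_Suc numeral_2_eq_2)

lemma lam_lt_1: "j < N \<Longrightarrow> lam j < 1"
proof -
  assume j: "j < N"
  obtain k where k: "k < N" "k \<noteq> j"
    using N_ge2 by (metis One_nat_def less_2_cases_iff not_less_eq order_less_le_trans zero_neq_one)
  have "lam j + lam k = (\<Sum>i\<in>{j, k}. lam i)" using k by simp
  also have "\<dots> \<le> 1"
    unfolding lam_sum[symmetric] using lam_pos j k by (intro sum_mono2) (auto intro: less_imp_le)
  finally show ?thesis using lam_pos k by auto
qed

lemma cyl_len_pos: "set w \<subseteq> {..<N} \<Longrightarrow> cyl_len lam w > 0"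
  by (induction w) (use lam_pos in auto)

lemma cylinder_interval: "set w \<subseteq> {..<N} \<Longrightarrow> cylinder lam w = {cyl_map lam w 0 .. cyl_map lam w 1}"
  using cyl_len_pos by (intro cylinder_eq_interval less_imp_le)

lemma cyl_map_mem_unit: "set w \<subseteq> {..<N} \<Longrightarrow> s \<in> {0..1} \<Longrightarrow> cyl_map lam w s \<in> {0..1}"
proof (induction w)
  case (Cons j w)
  then have "j < N" and g: "cyl_map lam w s \<in> {0..1}" by auto
  then have "0 \<le> lam j * cyl_map lam w s" "lam j * cyl_map lam w s \<le> lam j"
    using lam_pos by (auto intro: mult_left_le)
  then show ?case using gam_add_lam_le_1[OF \<open>j < N\<close>] gam_nonneg[of j] \<open>j < N\<close> by auto
qed simp

lemma cylinder_append_subset: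
  assumes "set w' \<subseteq> {..<N}"
  shows "cylinder lam (w @ w') \<subseteq> cylinder lam w"
  using cyl_map_mem_unit[OF assms] unfolding cylinder_def by (auto simp: cyl_map_append)

lemma cyl_map_replicate_last: "cyl_map lam (replicate k (N - 1)) 1 = 1"
  using gam_add_lam_last by (induction k) auto

lemma cyl_map_last_run: "cyl_map lam (w @ a # replicate k (N - 1)) 1 = cyl_map lam (w @ [Suc a]) 0"
  using cyl_map_replicate_last[of k] by (simp add: cyl_map_append gam_Suc add.commute)

definition lam_min :: real where
  "lam_min = Min (lam ` {..<N})"

definition lam_max :: real where
  "lam_max = Max (lam ` {..<N})"

lemma lessThan_N_nonempty: "{..<N} \<noteq> {}"
  using N_ge2 by (auto simp: lessThan_empty_iff)

lemma lam_min_pos: "lam_min > 0"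
  unfolding lam_min_def using lam_pos lessThan_N_nonempty by (subst Min_gr_iff) auto

lemma lam_min_le: "j < N \<Longrightarrow> lam_min \<le> lam j"
  unfolding lam_min_def by auto

lemma lam_min_le_1: "lam_min \<le> 1"
  using lam_min_le[of 0] lam_lt_1[of 0] N_ge2 by auto

lemma lam_max_lt_1: "lam_max < 1"
  unfolding lam_max_def using lam_lt_1 lessThan_N_nonempty by (subst Max_less_iff) auto

lemma lam_max_pos: "lam_max > 0"
proof -
  have "lam 0 \<le> lam_max" unfolding lam_max_def using N_ge2 by (intro Max_ge) auto
  then show ?thesis using lam_pos N_ge2 by force
qed

lemma lam_min_sq_le_lam_mult: "j < N \<Longrightarrow> k < N \<Longrightarrow> lam_min\<^sup>2 \<le> lam j * lam k"
  using lam_min_le[of j] lam_min_le[of k] lam_min_pos by (simp add: power2_eq_square mult_mono)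

lemma div_lam_mult_le_div_lam_min_sq: "0 \<le> d \<Longrightarrow> j < N \<Longrightarrow> k < N \<Longrightarrow> d / (lam j * lam k) \<le> d / lam_min\<^sup>2"
  using lam_min_sq_le_lam_mult lam_min_pos lam_pos by (intro divide_left_mono) (auto intro!: mult_pos_pos)

lemma div_lam_le_div_lam_min_sq:
  assumes "0 \<le> d" "j < N"
  shows "d / lam j \<le> d / lam_min\<^sup>2"
proof -
  have "lam_min\<^sup>2 \<le> lam_min"
    using lam_min_pos lam_min_le_1 mult_left_le_one_le[of lam_min lam_min] by (simp add: power2_eq_square)
  also have "\<dots> \<le> lam j" using assms(2) by (rule lam_min_le)
  finally show ?thesis using assms lam_min_pos lam_pos by (intro divide_left_mono) auto
qed

lemma cyl_len_le_lam_max_power: "set w \<subseteq> {..<N} \<Longrightarrow> cyl_len lam w \<le> lam_max ^ length w"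
proof (induction w)
  case (Cons j w)
  then have "lam j \<le> lam_max" unfolding lam_max_def by auto
  moreover have "0 \<le> cyl_len lam w" using Cons cyl_len_pos[of w] by simp
  ultimately show ?case using Cons lam_max_pos by (auto intro: mult_mono less_imp_le)
qed simp

lemma exists_zero_run_cylinder:
  assumes w: "set w \<subseteq> {..<N}" and y: "cyl_map lam w 0 < y" "y \<le> cyl_map lam w 1"
  obtains m where "y \<in> cylinder lam (w @ replicate m 0)"
    "cyl_len lam w * lam 0 ^ Suc m < y - cyl_map lam w 0"
proof -
  define s where "s = (y - cyl_map lam w 0) / cyl_len lam w"
  have len: "cyl_len lam w > 0" using cyl_len_pos[OF w] .
  have y_eq: "y = cyl_map lam w s"
    using len cyl_map_affine[of lam w s] by (simp add: s_def)
  have "0 < s" "s \<le> 1" using y len cyl_map_affine[of lam w 1] by (auto simp: s_def field_simps)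
  moreover have lam0: "0 < lam 0" "lam 0 < 1" using lam_pos lam_lt_1 N_ge2 by auto
  ultimately obtain m where m: "lam 0 ^ Suc m < s" "s \<le> lam 0 ^ m"
    using exists_power_bracket by metis
  have "y = cyl_map lam (w @ replicate m 0) (s / lam 0 ^ m)"
    using y_eq lam0 by (simp add: cyl_map_append cyl_map_replicate_0)
  moreover have "s / lam 0 ^ m \<in> {0..1}" using m \<open>0 < s\<close> lam0 by auto
  ultimately have "y \<in> cylinder lam (w @ replicate m 0)" unfolding cylinder_def by blast
  moreover have "cyl_len lam w * lam 0 ^ Suc m < y - cyl_map lam w 0"
    using m(1) len by (simp add: s_def field_simps)
  ultimately show ?thesis using that by blast
qed

lemma cyl_map_prefix_word_0: "cyl_map lam (prefix_word ii m) 0 = (\<Sum>n<m. (\<Prod>k<n. lam (ii k)) * gam lam (ii n))"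
  by (induction m) (simp_all add: prefix_word_Suc cyl_map_append cyl_map_affine[of _ _ "gam lam _"]
      cyl_len_prefix_word)

lemma coding_mem_cylinder:
  assumes ii: "\<forall>n. ii n < N"
  shows "coding lam ii \<in> cylinder lam (prefix_word ii n)"
proof -
  let ?f = "\<lambda>n. (\<Prod>k<n. lam (ii k)) * gam lam (ii n)"
  have pre: "set (prefix_word ii m) \<subseteq> {..<N}" for m using ii by (auto simp: prefix_word_def)
  have "?f n \<ge> 0" for n
    using ii lam_pos gam_nonneg[of "ii n"] by (intro mult_nonneg_nonneg prod_nonneg) (auto intro: less_imp_le)
  moreover have "(\<Sum>n<m. ?f n) \<le> 1" for m
    using cyl_map_mem_unit[OF pre, of 0] by (simp add: cyl_map_prefix_word_0)
  ultimately have "(\<lambda>m. \<Sum>n<m. ?f n) \<longlonglongrightarrow> coding lam ii"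
    unfolding coding_def by (intro summable_LIMSEQ summableI_nonneg_bounded) auto
  moreover have "\<forall>\<^sub>F m in sequentially. (\<Sum>n<m. ?f n) \<in> cylinder lam (prefix_word ii n)"
  proof (rule eventually_sequentiallyI)
    fix m assume "n \<le> m"
    then have "prefix_word ii m = prefix_word ii n @ map ii [n..<m]"
      using prefix_word_add[of ii n "m - n"] by simp
    then have "cylinder lam (prefix_word ii m) \<subseteq> cylinder lam (prefix_word ii n)"
      using cylinder_append_subset[of "map ii [n..<m]" "prefix_word ii n"] ii by auto
    then show "(\<Sum>n<m. ?f n) \<in> cylinder lam (prefix_word ii n)"
      by (auto simp: cylinder_def cyl_map_prefix_word_0[symmetric])
  qed
  ultimately show ?thesis
    by (intro Lim_in_closed_set[of _ "\<lambda>m. \<Sum>n<m. ?f n"]) (auto simp: cylinder_interval[OF pre])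
qed

lemma gam_flip: "j \<le> N \<Longrightarrow> gam (lam \<circ> flip) j = 1 - gam lam (N - j)"
proof (induction j)
  case (Suc j)
  then have "N - j = Suc (N - Suc j)" by simp
  then have "gam lam (N - j) = gam lam (N - Suc j) + lam (N - Suc j)" by (simp add: gam_Suc)
  with Suc show ?case by (simp add: gam_Suc)
qed (simp add: gam_def lam_sum)

lemma weights_flip: "weights N (lam \<circ> flip)"
  by unfold_locales (use N_ge2 lam_pos gam_flip[of N] in \<open>auto simp: gam_def\<close>)

lemma gam_flip_letter: "j < N \<Longrightarrow> gam (lam \<circ> flip) (flip j) = 1 - gam lam j - lam j"
  using gam_flip[of "flip j"] by (simp add: Suc_diff_Suc gam_Suc)

lemma cyl_map_flip:
  "set w \<subseteq> {..<N} \<Longrightarrow> cyl_map (lam \<circ> flip) (map flip w) s = 1 - cyl_map lam w (1 - s)"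
proof (induction w)
  case (Cons j w)
  then have j: "j < N" and flip_flip: "flip (flip j) = j"
    and IH: "cyl_map (lam \<circ> flip) (map flip w) s = 1 - cyl_map lam w (1 - s)"
    by (auto simp: o_def)
  have "cyl_map (lam \<circ> flip) (map flip (j # w)) s = lam j * (1 - cyl_map lam w (1 - s)) + (1 - gam lam j - lam j)"
    by (simp only: list.map cyl_map.simps IH gam_flip_letter[OF j] comp_apply flip_flip)
  then show ?case by (simp add: algebra_simps o_def)
qed simp

lemma cyl_len_flip: "set w \<subseteq> {..<N} \<Longrightarrow> cyl_len (lam \<circ> flip) (map flip w) = cyl_len lam w"
  by (induction w) auto

lemma map_flip_flip: "set w \<subseteq> {..<N} \<Longrightarrow> map flip (map flip w) = w"
  by (induction w) auto

lemma cylinder_flip: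
  assumes "set w \<subseteq> {..<N}"
  shows "cylinder (lam \<circ> flip) (map flip w) = (\<lambda>y. 1 - y) ` cylinder lam w"
proof -
  have "cylinder (lam \<circ> flip) (map flip w) = (\<lambda>s. 1 - cyl_map lam w (1 - s)) ` {0..1}"
    unfolding cylinder_def by (rule image_cong[OF refl]) (rule cyl_map_flip[OF assms])
  also have "\<dots> = (\<lambda>y. 1 - y) ` cyl_map lam w ` (\<lambda>s. 1 - s) ` {0..1}" by (simp only: image_image)
  also have "(\<lambda>s. 1 - s) ` {0..1} = {0..1::real}" using image_diff_atLeastAtMost[of 1 0 1] by simp
  finally show ?thesis by (simp only: cylinder_def)
qed

lemma eventually_cyl_len_prefix_lt_1:
  assumes "\<forall>n. ii n < N"
  shows "\<forall>\<^sub>F n in sequentially. cyl_len lam (prefix_word ii n) < 1"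
proof (rule eventually_sequentiallyI[of 1])
  fix n :: nat assume "1 \<le> n"
  have "cyl_len lam (prefix_word ii n) \<le> lam_max ^ n"
    using cyl_len_le_lam_max_power[of "prefix_word ii n"] assms by (auto simp: prefix_word_def)
  also have "\<dots> < 1" using \<open>1 \<le> n\<close> lam_max_pos lam_max_lt_1 by (simp add: power_less_one_iff)
  finally show "cyl_len lam (prefix_word ii n) < 1" .
qed

lemma opnorm_prefix_bound_of_liminf:
  fixes A :: "nat \<Rightarrow> real^'d^'d"
  assumes ii: "\<forall>n. ii n < N"
    and \<beta>: "ereal \<beta> < liminf (\<lambda>n. ereal (ln (opnorm (word_mat A (prefix_word ii n))) / ln (\<Prod>k<n. lam (ii k))))"
  obtains C where "\<forall>n. opnorm (word_mat A (prefix_word ii n)) \<le> C * cyl_len lam (prefix_word ii n) powr \<beta>"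
proof -
  have len_pos: "\<forall>n. cyl_len lam (prefix_word ii n) > 0"
    using ii by (intro allI cyl_len_pos) (auto simp: prefix_word_def)
  have "ereal \<beta> < liminf (\<lambda>n. ereal (ln (opnorm (word_mat A (prefix_word ii n)))
                                       / ln (cyl_len lam (prefix_word ii n))))"
    using \<beta> by (simp add: cyl_len_prefix_word)
  from liminf_log_ratio_imp_bound[OF _ len_pos eventually_cyl_len_prefix_lt_1[OF ii] this]
  show ?thesis using that by (auto simp: opnorm_nonneg)
qed

end

section \<open>Hoelder bound of the zipper curve at a coded point\<close>

locale zipper = weights N lam for N :: nat and lam :: "nat \<Rightarrow> real" +
  fixes A :: "nat \<Rightarrow> real^'d^'d" and t :: "nat \<Rightarrow> real^'d" and v :: "real \<Rightarrow> real^'d"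
  assumes v_eq: "\<forall>i<N. \<forall>x \<in> (\<lambda>y. lam i * y + gam lam i) ` {0..1}.
                  v x = A i *v v ((x - gam lam i) / lam i) + t i"
    and v_cont: "continuous_on {0..1} v"
    and opnorm_A_le_1: "\<forall>j<N. opnorm (A j) \<le> 1"
begin

definition osc :: real where
  "osc = diameter (v ` {0..1})"

lemma norm_diff_le_osc: "s \<in> {0..1} \<Longrightarrow> s' \<in> {0..1} \<Longrightarrow> norm (v s - v s') \<le> osc"
  unfolding osc_def dist_norm[symmetric]
  by (intro diameter_bounded_bound compact_imp_bounded compact_continuous_image v_cont) auto

lemma osc_nonneg: "osc \<ge> 0"
  using norm_diff_le_osc[of 0 0] by simp

lemma v_letter: "j < N \<Longrightarrow> s \<in> {0..1} \<Longrightarrow> v (lam j * s + gam lam j) = A j *v v s + t j"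
  using v_eq lam_pos by force

lemma v_cyl_map_diff:
  "set w \<subseteq> {..<N} \<Longrightarrow> s \<in> {0..1} \<Longrightarrow> s' \<in> {0..1} \<Longrightarrow>
   v (cyl_map lam w s) - v (cyl_map lam w s') = word_mat A w *v (v s - v s')"
proof (induction w)
  case (Cons j w)
  then have j: "j < N" and w: "set w \<subseteq> {..<N}" by auto
  have "v (cyl_map lam (j # w) s) - v (cyl_map lam (j # w) s')
      = A j *v (v (cyl_map lam w s) - v (cyl_map lam w s'))"
    using v_letter[OF j cyl_map_mem_unit[OF w Cons.prems(2)]]
      v_letter[OF j cyl_map_mem_unit[OF w Cons.prems(3)]]
    by (simp add: matrix_vector_mult_diff_distrib)
  also have "\<dots> = word_mat A (j # w) *v (v s - v s')"
    using Cons w by (simp only: matrix_vector_mul_assoc word_mat_Cons)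
  finally show ?case .
qed (simp add: matrix_vector_mul_lid)

lemma norm_diff_le_in_cylinder:
  assumes "set w \<subseteq> {..<N}" "y \<in> cylinder lam w" "y' \<in> cylinder lam w"
  shows "norm (v y - v y') \<le> opnorm (word_mat A w) * osc"
proof -
  obtain s s' where s: "s \<in> {0..1}" "s' \<in> {0..1}" and y: "y = cyl_map lam w s" "y' = cyl_map lam w s'"
    using assms(2,3) unfolding cylinder_def by auto
  have "norm (v y - v y') = norm (word_mat A w *v (v s - v s'))"
    using v_cyl_map_diff[OF assms(1) s] y by simp
  also have "\<dots> \<le> opnorm (word_mat A w) * osc"
    using opnorm_mult_le norm_diff_le_osc[OF s] opnorm_nonneg
    by (rule order_trans[OF _ mult_left_mono])
  finally show ?thesis .
qed

lemma zipper_flip: "zipper N (lam \<circ> flip) (A \<circ> flip) (t \<circ> flip) (\<lambda>s. v (1 - s))"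
proof (intro zipper.intro zipper_axioms.intro weights_flip ballI allI impI)
  show "continuous_on {0..1} (\<lambda>s. v (1 - s))"
    by (rule continuous_on_compose2[OF v_cont]) (auto intro: continuous_intros)
  show "opnorm ((A \<circ> flip) j) \<le> 1" if "j < N" for j
    using opnorm_A_le_1 that by simp
  fix i x
  assume i: "i < N" and "x \<in> (\<lambda>y. (lam \<circ> flip) i * y + gam (lam \<circ> flip) i) ` {0..1}"
  then obtain y where y: "y \<in> {0..1}" and x: "x = lam (flip i) * y + gam (lam \<circ> flip) i"
    by auto
  define k where "k = flip i"
  have k: "k < N" "flip k = i" using i N_ge2 by (auto simp: k_def)
  have "1 - x = lam k * (1 - y) + gam lam k"
    using x gam_flip_letter[OF k(1)] k by (simp add: k_def algebra_simps)
  moreover have "(x - gam (lam \<circ> flip) i) / (lam \<circ> flip) i = y"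
    using x lam_pos[rule_format, OF k(1)] by (simp add: k_def)
  ultimately show "v (1 - x) = (A \<circ> flip) i *v v (1 - (x - gam (lam \<circ> flip) i) / (lam \<circ> flip) i) + (t \<circ> flip) i"
    using v_letter[OF k(1), of "1 - y"] y by (simp add: k_def)
qed

end

locale right_holder = zipper N lam A t v
  for N :: nat and lam :: "nat \<Rightarrow> real" and A :: "nat \<Rightarrow> real^'d^'d" and t v +
  fixes ii :: "nat \<Rightarrow> nat" and x C beta Q :: real
  assumes quasi_mult_sym: "\<forall>u a m. set u \<subseteq> {..<N} \<longrightarrow> a < N \<longrightarrow>
      opnorm (word_mat A u) * opnorm (word_mat A (replicate m 0))
        \<le> Q * opnorm (word_mat A (u @ a # replicate m (N - 1)))"
    and Q_nonneg: "Q \<ge> 0"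
    and sym_lam: "lam 0 = lam (N - 1)"
    and ii_lt: "\<forall>n. ii n < N"
    and beta_pos: "beta > 0"
    and opnorm_prefix_le:
      "\<forall>n. opnorm (word_mat A (prefix_word ii n)) \<le> C * cyl_len lam (prefix_word ii n) powr beta"
    and x_mem: "\<forall>n. x \<in> cylinder lam (prefix_word ii n)"
begin

lemma C_nonneg: "C \<ge> 0"
  using opnorm_prefix_le[rule_format, of 0] opnorm_nonneg[of "mat 1 :: real^'d^'d"] by simp

lemma prefix_word_letters: "set (prefix_word ii n) \<subseteq> {..<N}"
  using ii_lt by (auto simp: prefix_word_def)

lemma x_bounds: "cyl_map lam (prefix_word ii n) 0 \<le> x" "x \<le> cyl_map lam (prefix_word ii n) 1"
  using x_mem cylinder_interval[OF prefix_word_letters] by auto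

lemma opnorm_prefix_osc_le:
  assumes "cyl_len lam (prefix_word ii n) \<le> r"
  shows "opnorm (word_mat A (prefix_word ii n)) * osc \<le> C * osc * r powr beta"
proof -
  have "opnorm (word_mat A (prefix_word ii n)) * osc \<le> C * cyl_len lam (prefix_word ii n) powr beta * osc"
    using opnorm_prefix_le osc_nonneg by (intro mult_right_mono) auto
  also have "\<dots> \<le> C * r powr beta * osc"
    using assms less_imp_le[OF cyl_len_pos[OF prefix_word_letters]] beta_pos C_nonneg osc_nonneg
    by (intro mult_right_mono mult_left_mono powr_mono2) auto
  finally show ?thesis by (simp add: ac_simps)
qed

lemma norm_diff_le_prefix:
  "y \<in> cylinder lam (prefix_word ii n) \<Longrightarrow> norm (v y - v x) \<le> opnorm (word_mat A (prefix_word ii n)) * osc"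
  using norm_diff_le_in_cylinder[OF prefix_word_letters] x_mem by blast

lemma exists_exit_level:
  assumes "x < y" "y \<le> 1"
  obtains n where "y \<in> cylinder lam (prefix_word ii n)" "cyl_map lam (prefix_word ii (Suc n)) 1 < y"
proof -
  let ?R = "\<lambda>n. cyl_map lam (prefix_word ii n) 1"
  obtain n where n: "lam_max ^ n < y - x"
    using real_arch_pow_inv[of "y - x" lam_max] lam_max_lt_1 assms by auto
  have "?R n = cyl_len lam (prefix_word ii n) + cyl_map lam (prefix_word ii n) 0"
    by (rule cyl_map_affine[of _ _ 1, simplified])
  also have "\<dots> \<le> lam_max ^ n + x"
    using cyl_len_le_lam_max_power[OF prefix_word_letters, of n] x_bounds(1)[of n]
    by (intro add_mono) simp_all
  finally have "?R n < y" using n by simp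
  with assms(2) obtain k where "\<forall>i\<le>k. \<not> ?R i < y" "?R (Suc k) < y"
    using ex_least_nat_less[of "\<lambda>n. ?R n < y" n] by auto
  moreover have "cyl_map lam (prefix_word ii k) 0 \<le> y" using x_bounds(1)[of k] assms(1) by simp
  ultimately show ?thesis
    using that[of k] cylinder_interval[OF prefix_word_letters] by (auto simp: not_less)
qed

lemma exists_last_letter_run:
  obtains k where "k \<le> m" "prefix_word ii (Suc n + k) = prefix_word ii (Suc n) @ replicate k (N - 1)"
    "k < m \<Longrightarrow> ii (Suc n + k) < N - 1"
proof -
  obtain k where k: "k \<le> m" "\<forall>i<k. \<not> (i = m \<or> ii (Suc n + i) \<noteq> N - 1)"
    "k = m \<or> ii (Suc n + k) \<noteq> N - 1"
    using ex_least_nat_le[of "\<lambda>i. i = m \<or> ii (Suc n + i) \<noteq> N - 1" m] by auto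
  have "map ii [Suc n..<Suc n + k] = replicate k (N - 1)"
    using k(2) by (intro nth_equalityI) (auto simp del: upt_Suc simp: nth_map_upt)
  then have "prefix_word ii (Suc n + k) = prefix_word ii (Suc n) @ replicate k (N - 1)"
    using prefix_word_add[of ii "Suc n" k] by simp
  moreover have "k < m \<Longrightarrow> ii (Suc n + k) < N - 1"
    using k(3) ii_lt[rule_format, of "Suc n + k"] by auto
  ultimately show ?thesis using that k(1) by blast
qed

lemma norm_diff_le_beyond_next_cylinder:
  assumes y: "y \<in> cylinder lam (prefix_word ii n)" and b: "b < N"
    and x: "x \<le> cyl_map lam (prefix_word ii n @ [b]) 0"
    and far: "cyl_map lam (prefix_word ii n @ [b]) 1 < y"
  shows "norm (v y - v x) \<le> C * osc * ((y - x) / lam_min\<^sup>2) powr beta"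
proof (rule order_trans[OF norm_diff_le_prefix[OF y] opnorm_prefix_osc_le])
  have "cyl_len lam (prefix_word ii n) * lam b < y - x"
    using x far cyl_map_affine[of lam "prefix_word ii n @ [b]" 1] by (simp add: cyl_len_append)
  moreover have "0 < cyl_len lam (prefix_word ii n) * lam b"
    using cyl_len_pos[OF prefix_word_letters] lam_pos b by simp
  ultimately have "cyl_len lam (prefix_word ii n) \<le> (y - x) / lam b" "0 \<le> y - x"
    using lam_pos b by (simp_all add: field_simps)
  with div_lam_le_div_lam_min_sq b show "cyl_len lam (prefix_word ii n) \<le> (y - x) / lam_min\<^sup>2"
    by (meson order_trans)
qed

text \<open>Here x lies in the cylinder of (i|n) a (N-1)^k and y in that of (i|n) b 0^m with b = a + 1;
  the two cylinders share the endpoint p, and the symmetric quasi-multiplicativity compares their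
  matrices.\<close>

lemma norm_diff_le_zero_run:
  assumes u: "set u \<subseteq> {..<N}" and a: "a < N" and b: "b < N" and km: "k \<le> m"
    and y: "y \<in> cylinder lam (u @ b # replicate m 0)"
  shows "norm (v y - v (cyl_map lam (u @ [b]) 0))
           \<le> Q * opnorm (word_mat A (u @ a # replicate k (N - 1))) * osc"
proof -
  have letters: "set (u @ b # replicate m 0) \<subseteq> {..<N}" using u b N_ge2 by auto
  have "cyl_map lam (u @ [b]) 0 = cyl_map lam (u @ b # replicate m 0) 0"
    using cyl_map_append[of lam "u @ [b]" "replicate m 0" 0] by (simp add: cyl_map_replicate_0)
  then have "cyl_map lam (u @ [b]) 0 \<in> cylinder lam (u @ b # replicate m 0)"
    unfolding cylinder_def by (rule image_eqI) simp
  then have "norm (v y - v (cyl_map lam (u @ [b]) 0)) \<le> opnorm (word_mat A (u @ b # replicate m 0)) * osc"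
    using norm_diff_le_in_cylinder[OF letters y] by blast
  also have "\<dots> \<le> opnorm (word_mat A u) * opnorm (word_mat A (replicate k 0)) * osc"
  proof -
    have "u @ b # replicate m 0 = u @ ([b] @ replicate k 0 @ replicate (m - k) 0)"
      using km by (simp add: replicate_add[symmetric])
    then have "opnorm (word_mat A (u @ b # replicate m 0))
        \<le> opnorm (word_mat A u) * opnorm (word_mat A ([b] @ replicate k 0 @ replicate (m - k) 0))"
      by (metis opnorm_word_mat_append_le)
    also have "\<dots> \<le> opnorm (word_mat A u) * opnorm (word_mat A (replicate k 0))"
      using opnorm_A_le_1 b N_ge2
      by (intro mult_left_mono opnorm_word_mat_infix_le opnorm_nonneg) auto
    finally show ?thesis using osc_nonneg by (rule mult_right_mono)
  qed
  also have "\<dots> \<le> Q * opnorm (word_mat A (u @ a # replicate k (N - 1))) * osc"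
    using quasi_mult_sym u a osc_nonneg by (intro mult_right_mono) auto
  finally show ?thesis .
qed

lemma cyl_len_last_run_le:
  assumes a: "ii n < N - 1" and km: "k \<le> m"
    and w: "prefix_word ii (Suc n + k) = prefix_word ii (Suc n) @ replicate k (N - 1)"
    and next_letter: "k < m \<Longrightarrow> ii (Suc n + k) < N - 1"
    and p: "p = cyl_map lam (prefix_word ii n @ [Suc (ii n)]) 0"
    and near: "cyl_len lam (prefix_word ii n @ [Suc (ii n)]) * lam 0 ^ Suc m < y - p"
  shows "cyl_len lam (prefix_word ii (Suc n + k)) \<le> (y - x) / lam_min\<^sup>2"
proof -
  let ?w = "prefix_word ii (Suc n + k)" and ?u = "prefix_word ii n" and ?b = "Suc (ii n)"
  have b: "?b < N" and lam0: "0 < lam 0" using a lam_pos N_ge2 by auto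
  have right: "cyl_map lam ?w 1 = p"
    using w p cyl_map_last_run[of ?u] by (simp add: prefix_word_Suc)
  have len_w: "0 < cyl_len lam ?w" using cyl_len_pos[OF prefix_word_letters] .
  have x_le_p: "x \<le> p" using x_bounds(2)[of "Suc n + k"] right by simp
  have "0 < cyl_len lam (?u @ [?b]) * lam 0 ^ Suc m"
    using cyl_len_pos[of "?u @ [?b]"] prefix_word_letters b lam0 by simp
  with near have p_lt_y: "p < y" by linarith
  with x_le_p have yx: "0 \<le> y - x" by linarith
  show ?thesis
  proof (cases "k = m")
    case True
    have "cyl_len lam ?w * (lam ?b * lam 0) = cyl_len lam (?u @ [?b]) * lam 0 ^ Suc m * lam (ii n)"
      using w True sym_lam by (simp add: prefix_word_Suc cyl_len_append cyl_len_replicate algebra_simps)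
    also have "\<dots> \<le> cyl_len lam (?u @ [?b]) * lam 0 ^ Suc m"
      using lam_lt_1[of "ii n"] lam_pos ii_lt cyl_len_pos[of "?u @ [?b]"] prefix_word_letters b lam0
      by (intro mult_right_le_one_le) (auto simp: less_imp_le)
    also have "\<dots> \<le> y - x" using near x_le_p by simp
    finally have "cyl_len lam ?w \<le> (y - x) / (lam ?b * lam 0)"
      using lam_pos b lam0 by (simp add: field_simps)
    then show ?thesis using div_lam_mult_le_div_lam_min_sq[OF yx b, of 0] N_ge2 by simp
  next
    case False
    let ?c = "ii (Suc n + k)"
    have c: "?c < N - 1" using False km next_letter by simp
    have "x \<le> cyl_map lam ?w (gam lam (Suc ?c))"
      using x_bounds(2)[of "Suc (Suc n + k)"] by (simp add: prefix_word_Suc cyl_map_append gam_Suc add.commute)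
    also have "\<dots> \<le> cyl_map lam ?w (1 - lam (N - 1))"
      using gam_mono[of "Suc ?c" "N - 1"] gam_add_lam_last c len_w
      by (subst (1 2) cyl_map_affine) (simp add: mult_left_mono)
    also have "\<dots> = p - cyl_len lam ?w * lam (N - 1)"
      using right cyl_map_affine[of lam ?w 1] cyl_map_affine[of lam ?w "1 - lam (N - 1)"]
      by (simp add: algebra_simps)
    finally have "cyl_len lam ?w \<le> (y - x) / lam (N - 1)"
      using p_lt_y lam_pos N_ge2 by (simp add: field_simps)
    then show ?thesis using div_lam_le_div_lam_min_sq[OF yx, of "N - 1"] N_ge2 by simp
  qed
qed

lemma norm_diff_le_in_next_cylinder:
  assumes a: "ii n < N - 1"
    and p: "p = cyl_map lam (prefix_word ii n @ [Suc (ii n)]) 0"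
    and y: "p < y" "y \<le> cyl_map lam (prefix_word ii n @ [Suc (ii n)]) 1"
  shows "norm (v y - v x) \<le> (Q + 1) * C * osc * ((y - x) / lam_min\<^sup>2) powr beta"
proof -
  let ?u = "prefix_word ii n" and ?b = "Suc (ii n)"
  let ?bound = "C * osc * ((y - x) / lam_min\<^sup>2) powr beta"
  have b: "?b < N" using a by simp
  have "set (?u @ [?b]) \<subseteq> {..<N}" using prefix_word_letters b by auto
  then obtain m where m: "y \<in> cylinder lam (?u @ ?b # replicate m 0)"
      "cyl_len lam (?u @ [?b]) * lam 0 ^ Suc m < y - p"
    using exists_zero_run_cylinder[of "?u @ [?b]" y] y p by (metis append_Cons append_assoc self_append_conv2)
  obtain k where k: "k \<le> m" "prefix_word ii (Suc n + k) = prefix_word ii (Suc n) @ replicate k (N - 1)"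
    "k < m \<Longrightarrow> ii (Suc n + k) < N - 1"
    using exists_last_letter_run[of m n] by blast
  let ?w = "prefix_word ii (Suc n + k)"
  have w: "?w = ?u @ ii n # replicate k (N - 1)" using k(2) by (simp add: prefix_word_Suc)
  have len: "cyl_len lam ?w \<le> (y - x) / lam_min\<^sup>2"
    using cyl_len_last_run_le[OF a k p m(2)] .
  have "norm (v y - v p) \<le> Q * (opnorm (word_mat A ?w) * osc)"
    using norm_diff_le_zero_run[OF prefix_word_letters ii_lt[rule_format, of n] b k(1) m(1)] w p
    by (simp add: mult.assoc)
  also have "\<dots> \<le> Q * ?bound" using opnorm_prefix_osc_le[OF len] Q_nonneg by (rule mult_left_mono)
  finally have yp: "norm (v y - v p) \<le> Q * ?bound" .
  have "p = cyl_map lam ?w 1" using w p cyl_map_last_run[of ?u] by simp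
  then have "p \<in> cylinder lam ?w" unfolding cylinder_def by simp
  then have px: "norm (v p - v x) \<le> ?bound"
    using order_trans[OF norm_diff_le_prefix opnorm_prefix_osc_le[OF len]] by blast
  have "norm (v y - v x) \<le> norm (v y - v p) + norm (v p - v x)"
    using norm_triangle_ineq[of "v y - v p" "v p - v x"] by simp
  also have "\<dots> \<le> (Q + 1) * ?bound" using yp px by (simp add: algebra_simps)
  finally show ?thesis by (simp add: ac_simps)
qed

lemma norm_diff_right_le:
  assumes "x < y" "y \<le> 1"
  shows "norm (v y - v x) \<le> (Q + 1) * C * osc * ((y - x) / lam_min\<^sup>2) powr beta"
proof -
  obtain n where y: "y \<in> cylinder lam (prefix_word ii n)"
    and exit: "cyl_map lam (prefix_word ii (Suc n)) 1 < y"
    using exists_exit_level[OF assms] .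
  let ?u = "prefix_word ii n" and ?b = "Suc (ii n)"
  have exit_eq: "cyl_map lam (prefix_word ii (Suc n)) 1 = cyl_map lam (?u @ [?b]) 0"
    using cyl_map_last_run[of ?u "ii n" 0] by (simp add: prefix_word_Suc)
  have a: "ii n < N - 1"
  proof (rule ccontr)
    assume "\<not> ii n < N - 1"
    then have "prefix_word ii (Suc n) = ?u @ replicate 1 (N - 1)"
      using ii_lt[rule_format, of n] by (simp add: prefix_word_Suc)
    then have "cyl_map lam (prefix_word ii (Suc n)) 1 = cyl_map lam ?u 1"
      by (simp only: cyl_map_append cyl_map_replicate_last)
    then show False using exit y cylinder_interval[OF prefix_word_letters] by auto
  qed
  show ?thesis
  proof (cases "y \<le> cyl_map lam (?u @ [?b]) 1")
    case True
    then show ?thesis using norm_diff_le_in_next_cylinder[OF a refl _ True] exit exit_eq by simp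
  next
    case False
    have "x \<le> cyl_map lam (?u @ [?b]) 0" using x_bounds(2)[of "Suc n"] exit_eq by simp
    then have "norm (v y - v x) \<le> C * osc * ((y - x) / lam_min\<^sup>2) powr beta"
      using norm_diff_le_beyond_next_cylinder[OF y, of ?b] a False by simp
    also have "\<dots> \<le> (Q + 1) * C * osc * ((y - x) / lam_min\<^sup>2) powr beta"
      using Q_nonneg C_nonneg osc_nonneg by (intro mult_right_mono) (auto simp: algebra_simps)
    finally show ?thesis .
  qed
qed

lemma right_holder_bound:
  obtains K where "\<And>y. x < y \<Longrightarrow> y \<le> 1 \<Longrightarrow> norm (v y - v x) \<le> K * (y - x) powr beta"
proof -
  have "norm (v y - v x) \<le> (Q + 1) * C * osc / (lam_min\<^sup>2) powr beta * (y - x) powr beta"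
    if "x < y" "y \<le> 1" for y
    using norm_diff_right_le[OF that] that lam_min_pos by (simp add: powr_divide)
  then show ?thesis using that by blast
qed

end
context zipper
begin

lemma right_holder_flip:
  assumes qm: "\<And>u a w. set u \<subseteq> {..<N} \<Longrightarrow> a < N \<Longrightarrow> set w \<subseteq> {..<N} \<Longrightarrow>
      opnorm (word_mat A u) * opnorm (word_mat A w) \<le> Q * opnorm (word_mat A (u @ a # w))"
    and Q: "Q \<ge> 0"
    and K: "K \<ge> 0" "\<forall>m. opnorm (word_mat A (replicate m (N - 1))) \<le> K * opnorm (word_mat A (replicate m 0))"
    and sym_lam: "lam 0 = lam (N - 1)" and ii: "\<forall>n. ii n < N" and beta: "beta > 0"
    and C: "\<forall>n. opnorm (word_mat A (prefix_word ii n)) \<le> C * cyl_len lam (prefix_word ii n) powr beta"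
    and x: "\<forall>n. x \<in> cylinder lam (prefix_word ii n)"
  shows "right_holder N (lam \<circ> flip) (A \<circ> flip) (t \<circ> flip) (\<lambda>s. v (1 - s)) (flip \<circ> ii) (1 - x) C beta (K * Q)"
proof (intro right_holder.intro zipper_flip right_holder_axioms.intro allI impI)
  have letters: "set (prefix_word ii n) \<subseteq> {..<N}" for n using ii by (auto simp: prefix_word_def)
  have flip_prefix: "prefix_word (flip \<circ> ii) n = map flip (prefix_word ii n)" for n
    by (simp add: prefix_word_def)
  have "\<forall>m. opnorm (word_mat (A \<circ> flip) (replicate m 0))
      \<le> K * opnorm (word_mat (A \<circ> flip) (replicate m (N - 1)))"
    using K(2) by (simp add: word_mat_map)
  from quasi_multiplicative_replicate[OF quasi_multiplicative_map[OF qm] K(1) this]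
  show "opnorm (word_mat (A \<circ> flip) u) * opnorm (word_mat (A \<circ> flip) (replicate m 0))
      \<le> K * Q * opnorm (word_mat (A \<circ> flip) (u @ a # replicate m (N - 1)))"
    if "set u \<subseteq> {..<N}" "a < N" for u a m
    using that N_ge2 by auto
  show "opnorm (word_mat (A \<circ> flip) (prefix_word (flip \<circ> ii) n))
      \<le> C * cyl_len (lam \<circ> flip) (prefix_word (flip \<circ> ii) n) powr beta" for n
    unfolding flip_prefix word_mat_map cyl_len_flip[OF letters] map_flip_flip[OF letters] using C by simp
  show "1 - x \<in> cylinder (lam \<circ> flip) (prefix_word (flip \<circ> ii) n)" for n
    unfolding flip_prefix cylinder_flip[OF letters] using x by simp
qed (use Q K(1) sym_lam ii beta N_ge2 in auto)

lemma holder_at_coded_point: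
  assumes qm: "\<And>u a w. set u \<subseteq> {..<N} \<Longrightarrow> a < N \<Longrightarrow> set w \<subseteq> {..<N} \<Longrightarrow>
      opnorm (word_mat A u) * opnorm (word_mat A w) \<le> Q * opnorm (word_mat A (u @ a # w))"
    and Q: "Q \<ge> 0"
    and K1: "K1 \<ge> 0" "\<forall>m. opnorm (word_mat A (replicate m 0)) \<le> K1 * opnorm (word_mat A (replicate m (N - 1)))"
    and K2: "K2 \<ge> 0" "\<forall>m. opnorm (word_mat A (replicate m (N - 1))) \<le> K2 * opnorm (word_mat A (replicate m 0))"
    and sym_lam: "lam 0 = lam (N - 1)" and ii: "\<forall>n. ii n < N" and beta: "beta > 0"
    and C: "\<forall>n. opnorm (word_mat A (prefix_word ii n)) \<le> C * cyl_len lam (prefix_word ii n) powr beta"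
    and x: "\<forall>n. x \<in> cylinder lam (prefix_word ii n)"
  obtains K where "\<forall>y\<in>{0..1}. norm (v y - v x) \<le> K * \<bar>y - x\<bar> powr beta"
proof -
  interpret right: right_holder N lam A t v ii x C beta "K1 * Q"
    using quasi_multiplicative_replicate[OF qm K1] N_ge2 Q K1(1) sym_lam ii beta C x
    by unfold_locales auto
  \<comment> \<open>The reflection s \<mapsto> 1 - s swaps the letters j and N - 1 - j and turns left neighbours of x into right ones.\<close>
  interpret left: right_holder N "lam \<circ> flip" "A \<circ> flip" "t \<circ> flip" "\<lambda>s. v (1 - s)" "flip \<circ> ii" "1 - x" C beta "K2 * Q"
    by (rule right_holder_flip[OF qm Q K2 sym_lam ii beta C x])
  obtain Ka where Ka: "\<And>y. x < y \<Longrightarrow> y \<le> 1 \<Longrightarrow> norm (v y - v x) \<le> Ka * (y - x) powr beta"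
    using right.right_holder_bound by blast
  obtain Kb where Kb: "\<And>y. 1 - x < y \<Longrightarrow> y \<le> 1 \<Longrightarrow> norm (v (1 - y) - v (1 - (1 - x))) \<le> Kb * (y - (1 - x)) powr beta"
    using left.right_holder_bound by blast
  have "norm (v y - v x) \<le> (\<bar>Ka\<bar> + \<bar>Kb\<bar>) * \<bar>y - x\<bar> powr beta" if y: "y \<in> {0..1}" for y
  proof (cases rule: linorder_cases[of x y])
    case less
    then have "norm (v y - v x) \<le> Ka * \<bar>y - x\<bar> powr beta" using Ka y by simp
    also have "\<dots> \<le> (\<bar>Ka\<bar> + \<bar>Kb\<bar>) * \<bar>y - x\<bar> powr beta" by (intro mult_right_mono) auto
    finally show ?thesis .
  next
    case greater
    then have "norm (v y - v x) \<le> Kb * \<bar>y - x\<bar> powr beta" using Kb[of "1 - y"] y by simp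
    also have "\<dots> \<le> (\<bar>Ka\<bar> + \<bar>Kb\<bar>) * \<bar>y - x\<bar> powr beta" by (intro mult_right_mono) auto
    finally show ?thesis .
  qed simp
  then show ?thesis using that by blast
qed

end

theorem lemma3p5:
  fixes N :: nat
    and A :: "nat \<Rightarrow> real^'d^'d" and t :: "nat \<Rightarrow> real^'d"
    and z :: "nat \<Rightarrow> real^'d"
    and \<Gamma> :: "(real^'d) set"
    and lam :: "nat \<Rightarrow> real"
    and v :: "real \<Rightarrow> real^'d"
    and M :: "(real^'d) set set"
    and ii :: "nat \<Rightarrow> nat"
  assumes N_pos: "N \<ge> 1"
    and inv: "\<forall>i<N. invertible (A i)"
    and contr: "\<forall>i<N. contraction (\<lambda>x. A i *v x + t i)"
    and vert0: "\<forall>i<N. A i *v z 0 + t i = z i"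
    and vertN: "\<forall>i<N. A i *v z N + t i = z (Suc i)"
    and attr: "compact \<Gamma>" "\<Gamma> \<noteq> {}" "\<Gamma> = (\<Union>i<N. (\<lambda>x. A i *v x + t i) ` \<Gamma>)"
    and lam_pos: "\<forall>i<N. lam i > 0"
    and lam_sum: "(\<Sum>i<N. lam i) = 1"
    and v_cont: "continuous_on {0..1} v"
    and v_eq: "\<forall>i<N. \<forall>x \<in> (\<lambda>y. lam i * y + gam lam i) ` {0..1}.
                  v x = A i *v v ((x - gam lam i) / lam i) + t i"
    and dom: "dominated_splitting_index1 N A M"
    and nondeg: "\<exists>U. bounded U \<and> open U \<and>
                   (\<forall>i<N. \<forall>j<N. i \<noteq> j \<longrightarrow>
                      (\<lambda>x. A i *v x + t i) ` U \<inter> (\<lambda>x. A j *v x + t j) ` U = {}) \<and>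
                   \<Gamma> \<inter> U \<noteq> {}"
    and nondeg_dir: "z N \<noteq> z 0"
    and nondeg_M: "proj_line (z N - z 0) \<notin>
                     (\<Inter>k. \<Inter>w\<in>words N k. {l \<in> proj_space. proj_act (word_mat A w) l \<notin> M})"
    and sym_lam: "lam 0 = lam (N - 1)"
    and sym_A: "(\<lambda>k. opnorm (word_mat A (replicate k 0)) / opnorm (word_mat A (replicate k (N - 1))))
                  \<longlonglongrightarrow> 1"
    and ii_Sigma: "\<forall>n. ii n < N"
  shows "holder_exp v (coding lam ii) \<ge>
           liminf (\<lambda>n. ereal (ln (opnorm (word_mat A (prefix_word ii n)))
                              / ln (\<Prod>k<n. lam (ii k))))"
proof -
  have N_ge2: "N \<ge> 2" by (rule two_le_if_distinct_endpoints[OF N_pos contr vert0 vertN nondeg_dir])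
  interpret zipper N lam A t v
    using N_ge2 lam_pos lam_sum v_eq v_cont contr by unfold_locales (auto intro: contraction_opnorm_le_1)
  obtain Q where Q: "Q > 0" "\<And>u a w. set u \<subseteq> {..<N} \<Longrightarrow> a < N \<Longrightarrow> set w \<subseteq> {..<N} \<Longrightarrow>
      opnorm (word_mat A u) * opnorm (word_mat A w) \<le> Q * opnorm (word_mat A (u @ a # w))"
    using dominated_splitting.quasi_multiplicative[of N A M] N_pos inv dom
    by (metis dominated_splitting.intro)
  have "0 < N" "N - 1 < N" using N_ge2 by auto
  then obtain K1 K2 where K: "K1 \<ge> 0"
    "\<forall>m. opnorm (word_mat A (replicate m 0)) \<le> K1 * opnorm (word_mat A (replicate m (N - 1)))"
    "K2 \<ge> 0" "\<forall>m. opnorm (word_mat A (replicate m (N - 1))) \<le> K2 * opnorm (word_mat A (replicate m 0))"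
    by (rule replicate_opnorms_comparable[OF inv _ _ sym_A])
  have x: "\<forall>n. coding lam ii \<in> cylinder lam (prefix_word ii n)"
    using coding_mem_cylinder ii_Sigma by blast
  show ?thesis
  proof (rule holder_exp_ge)
    show "continuous (at (coding lam ii) within {0..1}) v"
      using v_cont x[rule_format, of 0] by (simp add: cylinder_def continuous_on_eq_continuous_within)
    fix \<beta> :: real
    assume \<beta>: "0 < \<beta>" "ereal \<beta> < liminf (\<lambda>n. ereal (ln (opnorm (word_mat A (prefix_word ii n)))
                                           / ln (\<Prod>k<n. lam (ii k))))"
    obtain C where "\<forall>n. opnorm (word_mat A (prefix_word ii n)) \<le> C * cyl_len lam (prefix_word ii n) powr \<beta>"
      using opnorm_prefix_bound_of_liminf[OF ii_Sigma \<beta>(2)] by blast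
    from holder_at_coded_point[OF Q(2) less_imp_le[OF Q(1)] K sym_lam ii_Sigma \<beta>(1) this x]
    show "\<exists>K. \<forall>y\<in>{0..1}. norm (v y - v (coding lam ii)) \<le> K * \<bar>y - coding lam ii\<bar> powr \<beta>"
      by blast
  qed
qed

end
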